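(* Let $M\ge1$, $\beta>0$, $h\in\mathbb{R}$ with either $h\neq0$ or $\beta\le1$, and $\boldsymbol{\epsilon}\in\{-1,1\}^M$. Let $K\subset\mathbb{R}^M$ be compact and $F:K\times\{-1,1\}^M\to\mathbb{R}$ bounded. Then, as $N\to\infty$, $$\sup_{\mathbf{p}\in K}\Big|\frac1N\sum_{i=1}^N F(\mathbf{p},\mathbf{s}_i)-\langle F(\mathbf{p},\mathbf{s})\rangle_{\mathbf{s},\boldsymbol{\epsilon}}\Big|\longrightarrow0$$ in probability under $\mathcal{S}\sim P^{CW}_{\beta,h\boldsymbol{\epsilon}}$, i.e. for every $\varepsilon>0$ the $P^{CW}_{\beta,h\boldsymbol{\epsilon}}$-probability that this supremum exceeds $\varepsilon$ tends to $0$.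
   Context: $\mathbf{s}_i:=(s^1_i,\dots,s^M_i)$ for $\mathcal{S}=(\mathbf{s}^1,\dots,\mathbf{s}^M)$, $\mathbf{s}^\mu\in\{-1,1\}^N$. $P^{CW}_{\beta,\mathbf{h}}(\mathcal{S})=\prod_{\mu=1}^M z_{\beta,h^\mu}^{-1}\exp\big(\frac{\beta}{N}\sum_{i<j}s^\mu_is^\mu_j+h^\mu\sum_is^\mu_i\big)$. $\langle\cdot\rangle_{\mathbf{s},\boldsymbol{\epsilon}}$ is expectation over $\mathbf{s}\in\{-1,1\}^M$ with independent entries of means $m_0(\beta,\epsilon^\mu h)$, where $m_0(\beta,h):=\operatorname{argmax}_{x}[\log2+\log\cosh(\beta x+h)-\beta x^2/2]$. *)

theory Defs
  imports "HOL-Analysis.Analysis"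
begin

definition spin_configs :: "nat \<Rightarrow> (nat \<Rightarrow> real) set" where
  "spin_configs N = {s. (\<forall>i<N. s i \<in> {-1, 1}) \<and> (\<forall>i\<ge>N. s i = 0)}"

definition cw_weight :: "real \<Rightarrow> real \<Rightarrow> nat \<Rightarrow> (nat \<Rightarrow> real) \<Rightarrow> real" where
  "cw_weight \<beta> h N s =
     exp (\<beta> / real N * (\<Sum>i<N. \<Sum>j<N. if i < j then s i * s j else 0) + h * (\<Sum>i<N. s i))"

definition cw_Z :: "real \<Rightarrow> real \<Rightarrow> nat \<Rightarrow> real" where
  "cw_Z \<beta> h N = (\<Sum>s\<in>spin_configs N. cw_weight \<beta> h N s)"

text \<open>Configurations S = (s^1,...,s^M) of M copies, indexed by the finite type 'm (M = CARD('m)).\<close>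
definition multi_configs :: "nat \<Rightarrow> ('m \<Rightarrow> nat \<Rightarrow> real) set" where
  "multi_configs N = {S. \<forall>\<mu>. S \<mu> \<in> spin_configs N}"

definition cw_prob :: "real \<Rightarrow> ('m \<Rightarrow> real) \<Rightarrow> nat \<Rightarrow> ('m \<Rightarrow> nat \<Rightarrow> real) \<Rightarrow> real" where
  "cw_prob \<beta> hv N S = (\<Prod>\<mu>\<in>UNIV. cw_weight \<beta> (hv \<mu>) N (S \<mu>) / cw_Z \<beta> (hv \<mu>) N)"

definition m0 :: "real \<Rightarrow> real \<Rightarrow> real" where
  "m0 \<beta> h = (THE x. \<forall>y. ln 2 + ln (cosh (\<beta> * y + h)) - \<beta> * y\<^sup>2 / 2
                         \<le> ln 2 + ln (cosh (\<beta> * x + h)) - \<beta> * x\<^sup>2 / 2)"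

definition pm_vectors :: "('m \<Rightarrow> real) set" where
  "pm_vectors = {s. \<forall>\<mu>. s \<mu> \<in> {-1, 1}}"

text \<open>< G(s) >_{s,eps}: expectation over s in {-1,1}^M with independent entries
  of means m_0(beta, eps^mu h).\<close>
definition avg_s :: "real \<Rightarrow> real \<Rightarrow> ('m \<Rightarrow> real) \<Rightarrow> (('m \<Rightarrow> real) \<Rightarrow> real) \<Rightarrow> real" where
  "avg_s \<beta> h \<epsilon> G =
     (\<Sum>s\<in>pm_vectors. (\<Prod>\<mu>\<in>UNIV. (1 + s \<mu> * m0 \<beta> (\<epsilon> \<mu> * h)) / 2) * G s)"

end

theory Submission
  imports Defs "HOL-Combinatorics.Permutations"
begin

text \<open>Write \<open>\<pi>(s) = \<Prod>\<^sub>\<mu> (1 + s\<^sub>\<mu> m\<^sub>\<mu>) / 2\<close> with \<open>m\<^sub>\<mu> = m0 \<beta> (\<epsilon>\<^sub>\<mu> h)\<close> for the product law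
  on \<open>{-1,1}\<^sup>M\<close>. The empirical average of \<open>F p\<close> is \<open>\<Sum>\<^sub>s F p s \<cdot> f\<^sub>N(s)\<close>, where \<open>f\<^sub>N(s)\<close> is
  the fraction of sites whose spin column equals \<open>s\<close>. There are finitely many \<open>s\<close> and \<open>F\<close> is
  bounded, so the claim, uniformly in \<open>p\<close>, follows from \<open>f\<^sub>N(s) \<rightarrow> \<pi>(s)\<close> in \<open>L\<^sup>2\<close>. The copies are
  independent and the sites exchangeable, hence the first two moments of \<open>f\<^sub>N(s)\<close> are products of
  the one-copy moments \<open>E s\<^sub>0\<close> and \<open>E s\<^sub>0 s\<^sub>1\<close>, and it suffices that these tend to \<open>m0\<close> and
  \<open>m0\<^sup>2\<close>. Both follow from \<open>E \<bar>m\<^sub>N - m0\<bar> \<rightarrow> 0\<close> for the magnetization \<open>m\<^sub>N\<close>, a Laplace-type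
  estimate: the ratio of the weights of neighbouring magnetization levels \<open>x\<close> is essentially
  \<open>(1 - x)/(1 + x) \<cdot> exp (2 (\<beta> x + h))\<close>, which is bounded away from \<open>1\<close> on either side of the
  stable root of \<open>x = tanh (\<beta> x + h)\<close>, so the weights decay geometrically away from it; negative
  levels are handled by the spin-flip symmetry. For \<open>h \<noteq> 0\<close> or \<open>\<beta> \<le> 1\<close> that root is the unique
  maximiser \<open>m0\<close> of the mean-field potential.\<close>

section \<open>Spin configurations and the Curie-Weiss weight\<close>

definition spin_of_set :: "nat \<Rightarrow> nat set \<Rightarrow> nat \<Rightarrow> real" where
  "spin_of_set N A = (\<lambda>i. if i < N then (if i \<in> A then 1 else -1) else 0)"

lemma spin_of_set_in_spin_configs: "spin_of_set N A \<in> spin_configs N"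
  by (auto simp: spin_of_set_def spin_configs_def)

lemma bij_betw_spin_of_set: "bij_betw (spin_of_set N) (Pow {..<N}) (spin_configs N)"
proof (rule bij_betw_byWitness[where f' = "\<lambda>s. {i. i < N \<and> s i = 1}"])
  show "\<forall>A\<in>Pow {..<N}. {i. i < N \<and> spin_of_set N A i = 1} = A"
    by (auto simp: spin_of_set_def)
  show "\<forall>s\<in>spin_configs N. spin_of_set N {i. i < N \<and> s i = 1} = s"
    by (auto simp: spin_of_set_def spin_configs_def fun_eq_iff)
qed (auto simp: spin_of_set_in_spin_configs)

lemma finite_spin_configs [simp]: "finite (spin_configs N)"
  using bij_betw_finite[OF bij_betw_spin_of_set] by simp

lemma spin_configs_nonempty: "spin_configs N \<noteq> {}"
  using spin_of_set_in_spin_configs by blast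

lemma spin_configs_sq: "s \<in> spin_configs N \<Longrightarrow> i < N \<Longrightarrow> s i * s i = 1"
  by (auto simp: spin_configs_def)

lemma sum_spin_of_set:
  assumes "A \<subseteq> {..<N}"
  shows "(\<Sum>i<N. spin_of_set N A i) = 2 * real (card A) - real N"
proof -
  have "(\<Sum>i<N. spin_of_set N A i) = (\<Sum>i<N. (if i \<in> A then 2 else 0) - 1)"
    by (rule sum.cong) (auto simp: spin_of_set_def)
  also have "\<dots> = 2 * real (card A) - real N"
    using assms by (simp add: sum_subtractf sum.If_cases Int_absorb1)
  finally show ?thesis .
qed

lemma sum_diag_offdiag:
  "(\<Sum>i<N. \<Sum>j<N. if i = j then a else b) = real N * a + real N * (real N - 1) * (b::real)"
proof -
  have "(\<Sum>j<N. if i = j then a else b) = a + (real N - 1) * b" if "i < N" for i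
  proof -
    have "(\<Sum>j<N. if i = j then a else b) = (\<Sum>j<N. (if j = i then a - b else 0) + b)"
      by (intro sum.cong refl) auto
    then show ?thesis using that by (simp add: sum.distrib algebra_simps)
  qed
  then have "(\<Sum>i<N. \<Sum>j<N. if i = j then a else b) = (\<Sum>i<N. a + (real N - 1) * b)"
    by simp
  then show ?thesis by (simp add: algebra_simps)
qed

lemma sum_lt_pairs_spin_configs:
  assumes s: "s \<in> spin_configs N"
  shows "(\<Sum>i<N. \<Sum>j<N. if i < j then s i * s j else 0) = ((\<Sum>i<N. s i)^2 - real N) / 2"
proof -
  let ?U = "\<lambda>i j. if i < j then s i * s j else 0"
  let ?L = "\<lambda>i j. if j < i then s i * s j else 0"
  let ?D = "\<lambda>i j. if i = j then s i * s j else 0"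
  have "(\<Sum>i<N. s i)^2 = (\<Sum>i<N. \<Sum>j<N. ?U i j + ?L i j + ?D i j)"
    by (simp add: power2_eq_square sum_product) (intro sum.cong refl, auto)
  also have "\<dots> = (\<Sum>i<N. \<Sum>j<N. ?U i j) + (\<Sum>j<N. \<Sum>i<N. ?L i j) + (\<Sum>i<N. \<Sum>j<N. ?D i j)"
    by (simp add: sum.distrib sum.swap[of ?L])
  also have "(\<Sum>j<N. \<Sum>i<N. ?L i j) = (\<Sum>i<N. \<Sum>j<N. ?U i j)"
    by (intro sum.cong refl) (auto simp: mult.commute)
  also have "(\<Sum>i<N. \<Sum>j<N. ?D i j) = real N"
    using spin_configs_sq[OF s] by simp
  finally show ?thesis by simp
qed

definition weight_of_total :: "real \<Rightarrow> real \<Rightarrow> nat \<Rightarrow> real \<Rightarrow> real" where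
  "weight_of_total \<beta> h N k = exp (\<beta> / real N * ((k^2 - real N) / 2) + h * k)"

lemma cw_weight_eq_weight_of_total:
  "s \<in> spin_configs N \<Longrightarrow> cw_weight \<beta> h N s = weight_of_total \<beta> h N (\<Sum>i<N. s i)"
  by (simp add: cw_weight_def weight_of_total_def sum_lt_pairs_spin_configs)

lemma sum_spin_configs_by_total:
  "(\<Sum>s\<in>spin_configs N. g (\<Sum>i<N. s i)) = (\<Sum>j\<le>N. real (N choose j) * g (2 * real j - real N))"
proof -
  have "(\<Sum>s\<in>spin_configs N. g (\<Sum>i<N. s i)) = (\<Sum>A\<in>Pow {..<N}. g (\<Sum>i<N. spin_of_set N A i))"
    using sum.reindex_bij_betw[OF bij_betw_spin_of_set[of N], of "\<lambda>s. g (\<Sum>i<N. s i)"] by simp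
  also have "\<dots> = (\<Sum>A\<in>Pow {..<N}. g (2 * real (card A) - real N))"
    by (intro sum.cong refl) (simp add: sum_spin_of_set)
  also have "\<dots> = (\<Sum>j\<le>N. \<Sum>A\<in>{A \<in> Pow {..<N}. card A = j}. g (2 * real (card A) - real N))"
    by (rule sum.group[symmetric]) (auto simp: card_mono[of "{..<N}", simplified])
  also have "\<dots> = (\<Sum>j\<le>N. real (N choose j) * g (2 * real j - real N))"
    using n_subsets[of "{..<N}"] by simp
  finally show ?thesis .
qed

lemma cw_weight_pos: "cw_weight \<beta> h N s > 0"
  by (simp add: cw_weight_def)

lemma cw_Z_pos: "cw_Z \<beta> h N > 0"
  unfolding cw_Z_def using spin_configs_nonempty by (intro sum_pos) (auto simp: cw_weight_pos)

section \<open>Gibbs expectations of a single copy\<close>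

definition cw_expect :: "real \<Rightarrow> real \<Rightarrow> nat \<Rightarrow> ((nat \<Rightarrow> real) \<Rightarrow> real) \<Rightarrow> real" where
  "cw_expect \<beta> h N f = (\<Sum>s\<in>spin_configs N. cw_weight \<beta> h N s * f s) / cw_Z \<beta> h N"

lemma cw_expect_const: "cw_expect \<beta> h N (\<lambda>s. c) = c"
  using cw_Z_pos[of \<beta> h N] by (simp add: cw_expect_def cw_Z_def sum_distrib_right[symmetric])

lemma cw_expect_add: "cw_expect \<beta> h N (\<lambda>s. f s + g s) = cw_expect \<beta> h N f + cw_expect \<beta> h N g"
  by (simp add: cw_expect_def distrib_left sum.distrib add_divide_distrib)

lemma cw_expect_diff: "cw_expect \<beta> h N (\<lambda>s. f s - g s) = cw_expect \<beta> h N f - cw_expect \<beta> h N g"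
  by (simp add: cw_expect_def right_diff_distrib sum_subtractf diff_divide_distrib)

lemma cw_expect_cmult: "cw_expect \<beta> h N (\<lambda>s. c * f s) = c * cw_expect \<beta> h N f"
  by (simp add: cw_expect_def sum_distrib_left mult.left_commute)

lemma cw_expect_affine: "cw_expect \<beta> h N (\<lambda>s. a + c * f s) = a + c * cw_expect \<beta> h N f"
  by (simp add: cw_expect_add cw_expect_const cw_expect_cmult)

lemma cw_expect_sum:
  "finite I \<Longrightarrow> cw_expect \<beta> h N (\<lambda>s. \<Sum>i\<in>I. f i s) = (\<Sum>i\<in>I. cw_expect \<beta> h N (f i))"
  by (induction I rule: finite_induct) (simp_all add: cw_expect_const cw_expect_add)

lemma cw_expect_cong:
  "(\<And>s. s \<in> spin_configs N \<Longrightarrow> f s = g s) \<Longrightarrow> cw_expect \<beta> h N f = cw_expect \<beta> h N g"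
  unfolding cw_expect_def by (intro arg_cong2[where f="(/)"] sum.cong refl) auto

lemma cw_expect_mono:
  "(\<And>s. s \<in> spin_configs N \<Longrightarrow> f s \<le> g s) \<Longrightarrow> cw_expect \<beta> h N f \<le> cw_expect \<beta> h N g"
  unfolding cw_expect_def using cw_Z_pos[of \<beta> h N]
  by (intro divide_right_mono sum_mono mult_left_mono) (auto simp: cw_weight_pos less_imp_le)

lemma abs_cw_expect_le: "\<bar>cw_expect \<beta> h N f\<bar> \<le> cw_expect \<beta> h N (\<lambda>s. \<bar>f s\<bar>)"
proof -
  have "cw_expect \<beta> h N f \<le> cw_expect \<beta> h N (\<lambda>s. \<bar>f s\<bar>)"
    by (rule cw_expect_mono) simp
  moreover have "cw_expect \<beta> h N (\<lambda>s. - f s) \<le> cw_expect \<beta> h N (\<lambda>s. \<bar>f s\<bar>)"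
    by (rule cw_expect_mono) simp
  moreover have "cw_expect \<beta> h N (\<lambda>s. - f s) = - cw_expect \<beta> h N f"
    using cw_expect_cmult[of \<beta> h N "-1" f] by simp
  ultimately show ?thesis by linarith
qed

lemma bij_betw_permute_spin_configs:
  assumes p: "p permutes {..<N}"
  shows "bij_betw (\<lambda>s. s \<circ> p) (spin_configs N) (spin_configs N)"
proof -
  have in_spin: "s \<circ> q \<in> spin_configs N" if "q permutes {..<N}" "s \<in> spin_configs N" for q s
    using that permutes_in_image[OF that(1)] permutes_not_in[OF that(1)]
    unfolding spin_configs_def by auto
  show ?thesis
  proof (rule bij_betw_byWitness[where f' = "\<lambda>s. s \<circ> inv p"])
    show "\<forall>s\<in>spin_configs N. s \<circ> p \<circ> inv p = s"
      using permutes_inv_o(1)[OF p] by (simp add: o_assoc[symmetric])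
    show "\<forall>s\<in>spin_configs N. s \<circ> inv p \<circ> p = s"
      using permutes_inv_o(2)[OF p] by (simp add: o_assoc[symmetric])
  qed (use in_spin p permutes_inv[OF p] in auto)
qed

lemma cw_expect_permute:
  assumes p: "p permutes {..<N}"
  shows "cw_expect \<beta> h N (\<lambda>s. f (s \<circ> p)) = cw_expect \<beta> h N f"
proof -
  have weight: "cw_weight \<beta> h N (s \<circ> p) = cw_weight \<beta> h N s" if s: "s \<in> spin_configs N" for s
    using cw_weight_eq_weight_of_total[OF s] sum.permute[OF p, of s]
      cw_weight_eq_weight_of_total[of "s \<circ> p"] bij_betwE[OF bij_betw_permute_spin_configs[OF p]] s
    by simp
  have "(\<Sum>s\<in>spin_configs N. cw_weight \<beta> h N s * f s)
      = (\<Sum>s\<in>spin_configs N. cw_weight \<beta> h N (s \<circ> p) * f (s \<circ> p))"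
    using sum.reindex_bij_betw[OF bij_betw_permute_spin_configs[OF p], of "\<lambda>s. cw_weight \<beta> h N s * f s"]
    by simp
  also have "\<dots> = (\<Sum>s\<in>spin_configs N. cw_weight \<beta> h N s * f (s \<circ> p))"
    by (intro sum.cong refl) (simp add: weight)
  finally show ?thesis by (simp add: cw_expect_def)
qed

lemma cw_expect_spin:
  assumes "i < N"
  shows "cw_expect \<beta> h N (\<lambda>s. s i) = cw_expect \<beta> h N (\<lambda>s. s 0)"
  using cw_expect_permute[OF permutes_swap_id[of 0 "{..<N}" i], of \<beta> h "\<lambda>s. s 0"] assms by simp

lemma cw_expect_spin_pair:
  assumes "i < N" "j < N" "i \<noteq> j"
  shows "cw_expect \<beta> h N (\<lambda>s. s i * s j) = cw_expect \<beta> h N (\<lambda>s. s 0 * s 1)"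
proof -
  define p where "p = Transposition.transpose 0 i \<circ> Transposition.transpose 1 (Transposition.transpose 0 i j)"
  have "p permutes {..<N}"
    unfolding p_def using assms
    by (intro permutes_compose permutes_swap_id) (auto simp: Transposition.transpose_def)
  moreover have "p 0 = i" "p 1 = j"
    using assms by (auto simp: p_def Transposition.transpose_def)
  ultimately show ?thesis
    using cw_expect_permute[of p N \<beta> h "\<lambda>s. s 0 * s 1"] by (simp add: o_def)
qed

definition magnetization :: "nat \<Rightarrow> (nat \<Rightarrow> real) \<Rightarrow> real" where
  "magnetization N s = (\<Sum>i<N. s i) / real N"

lemma abs_magnetization_le_1:
  assumes s: "s \<in> spin_configs N"
  shows "\<bar>magnetization N s\<bar> \<le> 1"
proof -
  have "\<bar>\<Sum>i<N. s i\<bar> \<le> (\<Sum>i<N. \<bar>s i\<bar>)" by (rule sum_abs)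
  also have "\<dots> = (\<Sum>i<N. 1)" using s by (intro sum.cong refl) (auto simp: spin_configs_def)
  finally show ?thesis by (cases "N = 0") (auto simp: magnetization_def divide_le_eq)
qed

lemma cw_expect_magnetization:
  assumes "N > 0"
  shows "cw_expect \<beta> h N (magnetization N) = cw_expect \<beta> h N (\<lambda>s. s 0)"
proof -
  have "magnetization N = (\<lambda>s. (1 / real N) * (\<Sum>i<N. s i))"
    by (auto simp: magnetization_def fun_eq_iff)
  then have "cw_expect \<beta> h N (magnetization N) = (1 / real N) * (\<Sum>i<N. cw_expect \<beta> h N (\<lambda>s. s i))"
    by (simp only: cw_expect_cmult cw_expect_sum[OF finite_lessThan])
  also have "\<dots> = (1 / real N) * (\<Sum>i<N. cw_expect \<beta> h N (\<lambda>s. s 0))"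
    by (intro arg_cong[where f="\<lambda>t. (1 / real N) * t"] sum.cong refl cw_expect_spin) auto
  finally show ?thesis using assms by simp
qed

lemma cw_expect_magnetization_sq:
  assumes N: "N > 0"
  shows "cw_expect \<beta> h N (\<lambda>s. (magnetization N s)^2)
    = 1 / real N + (real N - 1) / real N * cw_expect \<beta> h N (\<lambda>s. s 0 * s 1)"
proof -
  let ?c = "cw_expect \<beta> h N (\<lambda>s. s 0 * s 1)"
  have pair: "cw_expect \<beta> h N (\<lambda>s. s i * s j) = (if i = j then 1 else ?c)"
    if "i < N" "j < N" for i j
  proof (cases "i = j")
    case True
    then show ?thesis
      using cw_expect_cong[of N "\<lambda>s. s i * s i" "\<lambda>_. 1"] spin_configs_sq \<open>i < N\<close>
      by (simp add: cw_expect_const)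
  qed (use cw_expect_spin_pair[OF that] in simp)
  have "cw_expect \<beta> h N (\<lambda>s. (magnetization N s)^2)
      = cw_expect \<beta> h N (\<lambda>s. (1 / real N^2) * (\<Sum>i<N. \<Sum>j<N. s i * s j))"
    by (intro arg_cong[where f="cw_expect \<beta> h N"] ext)
      (simp add: magnetization_def power2_eq_square sum_product power_divide)
  also have "\<dots> = (1 / real N^2) * (\<Sum>i<N. \<Sum>j<N. cw_expect \<beta> h N (\<lambda>s. s i * s j))"
    by (subst cw_expect_cmult) (simp add: cw_expect_sum)
  also have "\<dots> = (1 / real N^2) * (\<Sum>i<N. \<Sum>j<N. if i = j then 1 else ?c)"
    by (intro arg_cong[where f="\<lambda>t. (1 / real N^2) * t"] sum.cong refl pair) auto
  also have "\<dots> = 1 / real N + (real N - 1) / real N * ?c"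
    using N by (simp add: sum_diag_offdiag power2_eq_square field_simps)
  finally show ?thesis .
qed

section \<open>The mean-field equation\<close>

definition mf_gap :: "real \<Rightarrow> real \<Rightarrow> real \<Rightarrow> real" where
  "mf_gap \<beta> h y = tanh (\<beta> * y + h) - y"

definition mf_potential :: "real \<Rightarrow> real \<Rightarrow> real \<Rightarrow> real" where
  "mf_potential \<beta> h x = ln 2 + ln (cosh (\<beta> * x + h)) - \<beta> * x\<^sup>2 / 2"

text \<open>The stable root of the mean-field equation \<open>y = tanh (\<beta> y + h)\<close> for \<open>h \<ge> 0\<close>.\<close>
definition mf_stable_root :: "real \<Rightarrow> real \<Rightarrow> real \<Rightarrow> bool" where
  "mf_stable_root \<beta> h y0 \<longleftrightarrow> 0 \<le> y0 \<and> y0 < 1 \<and> (y0 = 0 \<longleftrightarrow> h = 0)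
     \<and> (\<forall>y. 0 \<le> y \<and> y < y0 \<longrightarrow> 0 < mf_gap \<beta> h y) \<and> (\<forall>y>y0. mf_gap \<beta> h y < 0)"

lemma mf_gap_has_real_derivative:
  "(mf_gap \<beta> h has_real_derivative (\<beta> * (1 - tanh (\<beta> * y + h)^2) - 1)) (at y)"
  unfolding mf_gap_def by (auto intro!: derivative_eq_intros)

lemma continuous_on_mf_gap: "continuous_on A (mf_gap \<beta> h)"
  unfolding mf_gap_def by (intro continuous_intros) auto

lemma mf_potential_has_real_derivative:
  "(mf_potential \<beta> h has_real_derivative (\<beta> * mf_gap \<beta> h x)) (at x)"
  unfolding mf_potential_def mf_gap_def
  by (auto intro!: derivative_eq_intros simp: tanh_def algebra_simps power2_eq_square)

lemma continuous_on_mf_potential: "continuous_on A (mf_potential \<beta> h)"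
  unfolding mf_potential_def by (intro continuous_intros) auto

lemma mf_potential_uminus: "mf_potential \<beta> (- h) x = mf_potential \<beta> h (- x)"
  using cosh_minus[of "\<beta> * x - h"] by (simp add: mf_potential_def algebra_simps)

lemma concave_mf_gap:
  assumes b: "\<beta> > 0" and h: "h \<ge> 0"
    and t: "0 \<le> t" "t \<le> 1" and xy: "0 \<le> x" "0 \<le> y"
  shows "(1 - t) * mf_gap \<beta> h x + t * mf_gap \<beta> h y \<le> mf_gap \<beta> h ((1 - t) * x + t * y)"
proof -
  have "convex_on {0..} (\<lambda>y. - mf_gap \<beta> h y)"
  proof (rule convex_on_realI[where f' = "\<lambda>y. - (\<beta> * (1 - tanh (\<beta> * y + h)^2) - 1)"])
    show "((\<lambda>y. - mf_gap \<beta> h y) has_real_derivative (- (\<beta> * (1 - tanh (\<beta> * y + h)^2) - 1))) (at y)"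
      for y
      using mf_gap_has_real_derivative[of \<beta> h y] by (auto intro!: derivative_eq_intros)
    fix u v :: real assume u: "u \<in> {0..}" and uv: "u \<le> v"
    have "0 \<le> tanh (\<beta> * u + h)" using u b h by simp
    moreover have "tanh (\<beta> * u + h) \<le> tanh (\<beta> * v + h)" using uv b by (simp add: mult_left_mono)
    ultimately have "tanh (\<beta> * u + h)^2 \<le> tanh (\<beta> * v + h)^2" by (simp add: power_mono)
    then show "- (\<beta> * (1 - tanh (\<beta> * u + h)^2) - 1) \<le> - (\<beta> * (1 - tanh (\<beta> * v + h)^2) - 1)"
      using b by (simp add: algebra_simps)
  qed simp
  from convex_onD[OF this, of t x y] t xy show ?thesis by simp
qed

text \<open>With \<open>h > 0\<close> the gap is positive at \<open>0\<close>, negative at \<open>1\<close> and concave on \<open>[0, \<infinity>)\<close>, so it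
  has exactly one sign change.\<close>
lemma mf_stable_root_pos_field:
  assumes b: "\<beta> > 0" and h: "h > 0"
  shows "\<exists>y0. mf_stable_root \<beta> h y0"
proof -
  have g0: "mf_gap \<beta> h 0 > 0" using h by (simp add: mf_gap_def)
  have g1: "mf_gap \<beta> h 1 < 0" using tanh_real_lt_1 by (simp add: mf_gap_def)
  obtain y0 where y0: "0 \<le> y0" "y0 \<le> 1" "mf_gap \<beta> h y0 = 0"
    using IVT2'[of "mf_gap \<beta> h" 1 0 0] g0 g1 continuous_on_mf_gap by force
  have y0_pos: "y0 > 0" using y0 g0 by (cases "y0 = 0") auto
  have y0_lt_1: "y0 < 1" using y0 g1 by (cases "y0 = 1") auto
  have chord: "(1 - t) * mf_gap \<beta> h 0 + t * mf_gap \<beta> h y \<le> mf_gap \<beta> h (t * y)"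
    if "0 \<le> t" "t \<le> 1" "0 \<le> y" for t y
    using concave_mf_gap[OF b less_imp_le[OF h] that(1,2) order_refl that(3)] by simp
  have below: "mf_gap \<beta> h y > 0" if "0 \<le> y" "y < y0" for y
  proof -
    have "(1 - y / y0) * mf_gap \<beta> h 0 \<le> mf_gap \<beta> h y"
      using chord[of "y / y0" y0] that y0 y0_pos by simp
    moreover have "0 < (1 - y / y0) * mf_gap \<beta> h 0" using that y0_pos g0 by simp
    ultimately show ?thesis by linarith
  qed
  have above: "mf_gap \<beta> h y < 0" if "y > y0" for y
  proof -
    have "(1 - y0 / y) * mf_gap \<beta> h 0 + y0 / y * mf_gap \<beta> h y \<le> 0"
      using chord[of "y0 / y" y] that y0 y0_pos by simp
    moreover have "0 < (1 - y0 / y) * mf_gap \<beta> h 0" using that y0_pos g0 by auto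
    ultimately have "y0 / y * mf_gap \<beta> h y < 0" by linarith
    moreover have "0 \<le> y0 / y" using that y0_pos by simp
    ultimately show ?thesis using mult_nonneg_nonneg[of "y0 / y" "mf_gap \<beta> h y"] by linarith
  qed
  show ?thesis
    using y0 y0_pos y0_lt_1 below above h unfolding mf_stable_root_def by (intro exI[of _ y0]) auto
qed

lemma mf_stable_root_zero_field:
  assumes b: "\<beta> > 0" "\<beta> \<le> 1"
  shows "mf_stable_root \<beta> 0 0"
proof -
  have "mf_gap \<beta> 0 y < mf_gap \<beta> 0 0" if "y > 0" for y
  proof (rule DERIV_neg_imp_decreasing_open[OF that _ continuous_on_mf_gap])
    fix z :: real assume z: "0 < z" "z < y"
    have "\<beta> * tanh (\<beta> * z)^2 > 0" using z b by simp
    then have "\<beta> * (1 - tanh (\<beta> * z + 0)^2) - 1 < 0" using b by (simp add: algebra_simps)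
    then show "\<exists>y. (mf_gap \<beta> 0 has_real_derivative y) (at z) \<and> y < 0"
      using mf_gap_has_real_derivative by blast
  qed
  then show ?thesis by (auto simp: mf_stable_root_def mf_gap_def)
qed

lemma mf_potential_le_reflect:
  assumes b: "\<beta> > 0" and h: "h \<ge> 0" and x: "x < 0"
  shows "mf_potential \<beta> h x \<le> mf_potential \<beta> h (- x)"
    and "h > 0 \<Longrightarrow> mf_potential \<beta> h x < mf_potential \<beta> h (- x)"
proof -
  have bx: "\<beta> * x < 0" using b x by (rule mult_pos_neg)
  have "\<bar>\<beta> * x + h\<bar> \<le> \<bar>\<beta> * (- x) + h\<bar>" using bx h by (simp add: abs_if)
  then have "cosh (\<beta> * x + h) \<le> cosh (\<beta> * (- x) + h)"
    using cosh_real_nonneg_le_iff[OF abs_ge_zero abs_ge_zero, of "\<beta> * x + h" "\<beta> * (- x) + h"] by simp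
  then show "mf_potential \<beta> h x \<le> mf_potential \<beta> h (- x)" by (simp add: mf_potential_def)
  assume "h > 0"
  then have "\<bar>\<beta> * x + h\<bar> < \<bar>\<beta> * (- x) + h\<bar>" using bx by (simp add: abs_if)
  then have "cosh (\<beta> * x + h) < cosh (\<beta> * (- x) + h)"
    using cosh_real_nonneg_less_iff[OF abs_ge_zero abs_ge_zero, of "\<beta> * x + h" "\<beta> * (- x) + h"] by simp
  then show "mf_potential \<beta> h x < mf_potential \<beta> h (- x)" by (simp add: mf_potential_def)
qed

lemma mf_potential_strict_max:
  assumes b: "\<beta> > 0" and h: "h \<ge> 0" and y0: "mf_stable_root \<beta> h y0" and x: "x \<noteq> y0"
  shows "mf_potential \<beta> h x < mf_potential \<beta> h y0"
proof -
  have incr: "mf_potential \<beta> h x < mf_potential \<beta> h y0" if "0 \<le> x" "x < y0" for x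
  proof (rule DERIV_pos_imp_increasing_open[OF that(2) _ continuous_on_mf_potential])
    fix z assume "x < z" "z < y0"
    then have "\<beta> * mf_gap \<beta> h z > 0" using y0 that b by (auto simp: mf_stable_root_def)
    then show "\<exists>y. (mf_potential \<beta> h has_real_derivative y) (at z) \<and> 0 < y"
      using mf_potential_has_real_derivative by blast
  qed
  have decr: "mf_potential \<beta> h x < mf_potential \<beta> h y0" if "y0 < x" for x
  proof (rule DERIV_neg_imp_decreasing_open[OF that _ continuous_on_mf_potential])
    fix z assume "y0 < z" "z < x"
    then have "\<beta> * mf_gap \<beta> h z < 0" using y0 b by (auto simp: mf_stable_root_def mult_pos_neg)
    then show "\<exists>y. (mf_potential \<beta> h has_real_derivative y) (at z) \<and> y < 0"
      using mf_potential_has_real_derivative by blast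
  qed
  have nonneg: "mf_potential \<beta> h x < mf_potential \<beta> h y0" if "0 \<le> x" "x \<noteq> y0" for x
    using incr decr that by (cases "x < y0") auto
  show ?thesis
  proof (cases "x \<ge> 0")
    case False
    then have "mf_potential \<beta> h x \<le> mf_potential \<beta> h (- x)"
      and "h > 0 \<Longrightarrow> mf_potential \<beta> h x < mf_potential \<beta> h (- x)"
      using mf_potential_le_reflect[OF b h] by auto
    moreover have "h = 0 \<Longrightarrow> y0 = 0" using y0 by (simp add: mf_stable_root_def)
    moreover have "- x \<noteq> y0 \<Longrightarrow> mf_potential \<beta> h (- x) < mf_potential \<beta> h y0"
      using nonneg False by simp
    ultimately show ?thesis using h False by (cases "h = 0") fastforce+
  qed (use nonneg x in auto)
qed

lemma m0_eqI:
  assumes "\<And>x. x \<noteq> y0 \<Longrightarrow> mf_potential \<beta> h x < mf_potential \<beta> h y0"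
  shows "m0 \<beta> h = y0"
  unfolding m0_def
proof (rule the_equality)
  show "\<forall>y. ln 2 + ln (cosh (\<beta> * y + h)) - \<beta> * y\<^sup>2 / 2 \<le> ln 2 + ln (cosh (\<beta> * y0 + h)) - \<beta> * y0\<^sup>2 / 2"
    using assms unfolding mf_potential_def by (metis order.order_iff_strict)
  fix x assume "\<forall>y. ln 2 + ln (cosh (\<beta> * y + h)) - \<beta> * y\<^sup>2 / 2 \<le> ln 2 + ln (cosh (\<beta> * x + h)) - \<beta> * x\<^sup>2 / 2"
  then show "x = y0" using assms[of x] unfolding mf_potential_def by (meson not_le)
qed

lemma m0_eq_mf_stable_root:
  assumes "\<beta> > 0" "h \<ge> 0" "mf_stable_root \<beta> h y0"
  shows "m0 \<beta> h = y0"
  using mf_potential_strict_max[OF assms] by (rule m0_eqI)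

lemma mf_gap_bounded_away:
  assumes y0: "mf_stable_root \<beta> h y0" and d: "d > 0"
  obtains \<eta> where "\<eta> > 0" "\<And>y. 0 \<le> y \<Longrightarrow> y \<le> y0 - d \<Longrightarrow> mf_gap \<beta> h y \<ge> \<eta>"
    "\<And>y. y0 + d \<le> y \<Longrightarrow> y \<le> 1 \<Longrightarrow> mf_gap \<beta> h y \<le> - \<eta>"
proof -
  obtain \<eta>1 where e1: "\<eta>1 > 0" "\<forall>y. 0 \<le> y \<and> y \<le> y0 - d \<longrightarrow> mf_gap \<beta> h y \<ge> \<eta>1"
  proof (cases "y0 - d < 0")
    case False
    then have "{0..y0-d} \<noteq> {}" by simp
    then obtain x where x: "x \<in> {0..y0-d}" "\<forall>y\<in>{0..y0-d}. mf_gap \<beta> h x \<le> mf_gap \<beta> h y"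
      using continuous_attains_inf[OF compact_Icc _ continuous_on_mf_gap] by blast
    then have "mf_gap \<beta> h x > 0" using y0 d by (auto simp: mf_stable_root_def)
    then show ?thesis using that[of "mf_gap \<beta> h x"] x by auto
  qed (use that[of 1] in auto)
  obtain \<eta>2 where e2: "\<eta>2 > 0" "\<forall>y. y0 + d \<le> y \<and> y \<le> 1 \<longrightarrow> mf_gap \<beta> h y \<le> - \<eta>2"
  proof (cases "y0 + d > 1")
    case False
    then have "{y0+d..1} \<noteq> {}" by simp
    then obtain x where x: "x \<in> {y0+d..1}" "\<forall>y\<in>{y0+d..1}. mf_gap \<beta> h y \<le> mf_gap \<beta> h x"
      using continuous_attains_sup[OF compact_Icc _ continuous_on_mf_gap] by blast
    then have "mf_gap \<beta> h x < 0" using y0 d by (auto simp: mf_stable_root_def)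
    then show ?thesis using that[of "- mf_gap \<beta> h x"] x by auto
  qed (use that[of 1] in auto)
  show ?thesis
  proof (rule that[of "min \<eta>1 \<eta>2"])
    fix y assume "0 \<le> y" "y \<le> y0 - d"
    then have "\<eta>1 \<le> mf_gap \<beta> h y" using e1 by blast
    then show "min \<eta>1 \<eta>2 \<le> mf_gap \<beta> h y" by (simp add: min_le_iff_disj)
  next
    fix y assume "y0 + d \<le> y" "y \<le> 1"
    then have "mf_gap \<beta> h y \<le> - \<eta>2" using e2 by blast
    then show "mf_gap \<beta> h y \<le> - min \<eta>1 \<eta>2" by (simp add: min_le_iff_disj)
  qed (use e1 e2 in simp)
qed

lemma mf_stable_root_exists:
  assumes "\<beta> > 0" "h \<ge> 0" "h > 0 \<or> \<beta> \<le> 1"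
  obtains y0 where "mf_stable_root \<beta> h y0"
  using mf_stable_root_pos_field[of \<beta> h] mf_stable_root_zero_field[of \<beta>] assms
  by (cases "h = 0") auto

lemma m0_uminus_eq:
  assumes "\<beta> > 0" "h \<ge> 0" "mf_stable_root \<beta> h y0"
  shows "m0 \<beta> (- h) = - y0"
  by (rule m0_eqI)
    (use mf_potential_strict_max[OF assms, of "- x" for x] in \<open>simp add: mf_potential_uminus\<close>)

section \<open>Weights of magnetization levels\<close>

text \<open>\<open>level N j\<close> is the magnetization of a configuration with \<open>j\<close> spins up, and
  \<open>level_weight \<beta> h N j\<close> the total Curie-Weiss weight of all such configurations.\<close>
definition level :: "nat \<Rightarrow> nat \<Rightarrow> real" where
  "level N j = (2 * real j - real N) / real N"

definition level_weight :: "real \<Rightarrow> real \<Rightarrow> nat \<Rightarrow> nat \<Rightarrow> real" where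
  "level_weight \<beta> h N j = real (N choose j) * weight_of_total \<beta> h N (2 * real j - real N)"

lemma level_add: "N > 0 \<Longrightarrow> level N (j + l) = level N j + 2 * real l / real N"
  by (simp add: level_def field_simps)

lemma level_less_1_iff: "N > 0 \<Longrightarrow> level N j < 1 \<longleftrightarrow> j < N"
  by (simp add: level_def divide_less_eq)

lemma abs_level_le_1: "j \<le> N \<Longrightarrow> N > 0 \<Longrightarrow> \<bar>level N j\<bar> \<le> 1"
  by (simp add: level_def field_simps)

lemma level_diff: "j \<le> N \<Longrightarrow> level N (N - j) = - level N j"
  by (simp add: level_def of_nat_diff minus_divide_left algebra_simps)

lemma level_weight_pos: "j \<le> N \<Longrightarrow> level_weight \<beta> h N j > 0"
  by (simp add: level_weight_def weight_of_total_def)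

lemma level_weight_nonneg: "level_weight \<beta> h N j \<ge> 0"
  by (simp add: level_weight_def weight_of_total_def)

lemma level_weight_le_sum: "j \<le> N \<Longrightarrow> level_weight \<beta> h N j \<le> (\<Sum>k\<le>N. level_weight \<beta> h N k)"
  using level_weight_nonneg by (intro member_le_sum) auto

lemma sum_level_weight_pos: "(\<Sum>k\<le>N. level_weight \<beta> h N k) > 0"
  using level_weight_pos by (intro sum_pos) auto

lemma level_weight_Suc:
  assumes j: "j < N"
  shows "level_weight \<beta> h N (Suc j)
    = level_weight \<beta> h N j * ((real N - real j) / (real j + 1)) * exp (2 * (\<beta> * level N j + h) + 2 * \<beta> / real N)"
proof -
  have "real (Suc j) * real (N choose Suc j) = real (N - j) * real (N choose j)"
    using binomial_absorption[of j N] binomial_absorb_comp[of N j] by (metis of_nat_mult)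
  then have binom: "real (N choose Suc j) = real (N choose j) * ((real N - real j) / (real j + 1))"
    using j by (simp add: of_nat_diff field_simps)
  have "weight_of_total \<beta> h N (2 * real (Suc j) - real N)
      = weight_of_total \<beta> h N (2 * real j - real N) * exp (2 * (\<beta> * level N j + h) + 2 * \<beta> / real N)"
    using j unfolding weight_of_total_def level_def
    by (simp add: exp_add[symmetric] field_simps power2_eq_square)
  then show ?thesis by (simp add: level_weight_def binom)
qed

lemma level_weight_reflect:
  assumes "j \<le> N"
  shows "level_weight \<beta> h N j = level_weight \<beta> h N (N - j) * exp (2 * h * (2 * real j - real N))"
proof -
  let ?k = "2 * real j - real N"
  have k: "2 * real (N - j) - real N = - ?k" using assms by (simp add: of_nat_diff)
  have "weight_of_total \<beta> h N k = weight_of_total \<beta> h N (- k) * exp (2 * h * k)" for k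
    unfolding weight_of_total_def by (simp add: exp_add[symmetric] algebra_simps)
  from this[of ?k] show ?thesis
    unfolding level_weight_def k binomial_symmetric[OF assms, symmetric] by simp
qed

lemma level_weight_uminus:
  assumes "j \<le> N"
  shows "level_weight \<beta> (- h) N (N - j) = level_weight \<beta> h N j"
proof -
  have k: "2 * real (N - j) - real N = - (2 * real j - real N)" using assms by (simp add: of_nat_diff)
  have w: "weight_of_total \<beta> (- h) N (- x) = weight_of_total \<beta> h N x" for x
    by (simp add: weight_of_total_def)
  show ?thesis
    unfolding level_weight_def binomial_symmetric[OF assms, symmetric] k w ..
qed

lemma sum_level_weight_uminus:
  "(\<Sum>j\<le>N. level_weight \<beta> h N j * g (level N j)) = (\<Sum>j\<le>N. level_weight \<beta> (- h) N j * g (- level N j))"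
proof -
  have "(\<Sum>j\<le>N. level_weight \<beta> (- h) N j * g (- level N j))
      = (\<Sum>j\<in>{0..N}. level_weight \<beta> (- h) N (N + 0 - j) * g (- level N (N + 0 - j)))"
    unfolding atMost_atLeast0 by (rule sum.atLeastAtMost_rev)
  also have "\<dots> = (\<Sum>j\<le>N. level_weight \<beta> h N j * g (level N j))"
    by (simp add: atMost_atLeast0 level_weight_uminus level_diff)
  finally show ?thesis ..
qed

lemma tanh_mul_exp_add_1: "tanh (t::real) * (exp (2 * t) + 1) = exp (2 * t) - 1"
proof -
  have u: "exp (2 * t) * exp (- 2 * t) = 1" by (simp add: exp_add[symmetric])
  have "tanh t * (exp (2 * t) + 1)
      = (1 - exp (- 2 * t)) / (1 + exp (- 2 * t)) * (exp (2 * t) * (1 + exp (- 2 * t)))"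
    using u by (simp add: tanh_real_altdef algebra_simps)
  also have "\<dots> = (1 - exp (- 2 * t)) * exp (2 * t)"
    using add_pos_pos[OF zero_less_one exp_gt_zero, of "- 2 * t"] by simp
  also have "\<dots> = exp (2 * t) - 1" using u by (simp add: algebra_simps)
  finally show ?thesis .
qed

text \<open>The ratio of neighbouring level weights is essentially
  \<open>(1 - x) / (1 + x) * exp (2 (\<beta> x + h))\<close> at \<open>x = level N j\<close>; it exceeds \<open>1\<close> exactly by a
  positive multiple of the mean-field gap.\<close>
lemma level_ratio_eq:
  fixes x t :: real
  assumes "x > -1"
  shows "(1 - x) / (1 + x) * exp (2 * t) = 1 + (exp (2 * t) + 1) * (tanh t - x) / (1 + x)"
proof -
  have "(1 - x) * exp (2 * t) = (1 + x) + (exp (2 * t) + 1) * (tanh t - x)"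
    using tanh_mul_exp_add_1[of t] by (simp add: algebra_simps)
  then show ?thesis using assms by (simp add: field_simps)
qed

lemma level_ratio_le:
  assumes x: "0 \<le> x" "x \<le> 1" and gap: "mf_gap \<beta> h x \<le> - \<eta>" and \<eta>: "\<eta> > 0"
  shows "(1 - x) / (1 + x) * exp (2 * (\<beta> * x + h)) \<le> 1 - \<eta> / 2"
proof -
  let ?E = "exp (2 * (\<beta> * x + h))"
  have neg: "tanh (\<beta> * x + h) - x \<le> - \<eta>" using gap by (simp add: mf_gap_def)
  then have "(?E + 1) * (tanh (\<beta> * x + h) - x) \<le> 1 * (tanh (\<beta> * x + h) - x)"
    using \<eta> by (intro mult_right_mono_neg) auto
  also have "\<dots> \<le> 1 * (- \<eta>)" using neg by simp
  also have "\<dots> \<le> (1 + x) * (- \<eta> / 2)" using x \<eta> by (simp add: algebra_simps)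
  finally have "(?E + 1) * (tanh (\<beta> * x + h) - x) / (1 + x) \<le> - \<eta> / 2"
    using x by (simp add: divide_le_eq mult.commute)
  then show ?thesis using level_ratio_eq[of x "\<beta> * x + h"] x by simp
qed

lemma level_ratio_ge:
  assumes x: "0 \<le> x" "x \<le> 1" and gap: "mf_gap \<beta> h x \<ge> \<eta>" and \<eta>: "\<eta> > 0"
  shows "(1 - x) / (1 + x) * exp (2 * (\<beta> * x + h)) \<ge> 1 + \<eta> / 2"
proof -
  let ?E = "exp (2 * (\<beta> * x + h))"
  have "(1 + x) * (\<eta> / 2) \<le> 1 * \<eta>" using x \<eta> by (simp add: algebra_simps)
  also have "\<dots> \<le> (?E + 1) * (tanh (\<beta> * x + h) - x)"
    using gap \<eta> by (intro mult_mono) (auto simp: mf_gap_def)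
  finally have "(?E + 1) * (tanh (\<beta> * x + h) - x) / (1 + x) \<ge> \<eta> / 2"
    using x by (simp add: le_divide_eq mult.commute)
  then show ?thesis using level_ratio_eq[of x "\<beta> * x + h"] x by simp
qed

lemma level_weight_Suc_le:
  assumes j: "j < N" and x: "0 \<le> level N j" and gap: "mf_gap \<beta> h (level N j) \<le> - \<eta>"
    and \<eta>: "\<eta> > 0" and \<theta>: "(1 - \<eta> / 2) * exp (2 * \<beta> / real N) \<le> \<theta>"
  shows "level_weight \<beta> h N (Suc j) \<le> \<theta> * level_weight \<beta> h N j"
proof -
  let ?x = "level N j" and ?a = "level_weight \<beta> h N j"
  have N: "real N > 0" using j by simp
  have jp: "real j > 0" using x N by (auto simp: level_def zero_le_divide_iff)
  have "(real N - real j) / (real j + 1) \<le> (real N - real j) / real j"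
    using j jp by (intro divide_left_mono) auto
  also have "\<dots> = (1 - ?x) / (1 + ?x)"
    using N jp by (simp add: level_def field_simps)
  finally have frac: "(real N - real j) / (real j + 1) \<le> (1 - ?x) / (1 + ?x)" .
  have ex: "exp (2 * (\<beta> * ?x + h) + 2 * \<beta> / real N) = exp (2 * (\<beta> * ?x + h)) * exp (2 * \<beta> / real N)"
    by (simp add: exp_add)
  have "level_weight \<beta> h N (Suc j)
      = ?a * ((real N - real j) / (real j + 1)) * (exp (2 * (\<beta> * ?x + h)) * exp (2 * \<beta> / real N))"
    by (simp only: level_weight_Suc[OF j] ex)
  also have "\<dots> \<le> ?a * ((1 - ?x) / (1 + ?x)) * (exp (2 * (\<beta> * ?x + h)) * exp (2 * \<beta> / real N))"
    using frac level_weight_nonneg by (intro mult_right_mono mult_left_mono) auto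
  also have "\<dots> = ?a * ((1 - ?x) / (1 + ?x) * exp (2 * (\<beta> * ?x + h))) * exp (2 * \<beta> / real N)"
    by simp
  also have "\<dots> \<le> ?a * (1 - \<eta> / 2) * exp (2 * \<beta> / real N)"
    using level_ratio_le[OF x _ gap \<eta>] abs_level_le_1[of j N] j level_weight_nonneg
    by (intro mult_right_mono mult_left_mono) auto
  also have "\<dots> \<le> ?a * \<theta>"
    using \<theta> level_weight_nonneg by (simp add: mult.assoc mult_left_mono)
  finally show ?thesis by (simp add: mult.commute)
qed

lemma level_weight_le_Suc:
  assumes j: "j < N" and x: "0 \<le> level N (Suc j)" and gap: "mf_gap \<beta> h (level N (Suc j)) \<ge> \<eta>"
    and \<eta>: "\<eta> > 0" and \<theta>: "1 \<le> \<theta> * ((1 + \<eta> / 2) * exp (- 2 * \<beta> / real N))"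
  shows "level_weight \<beta> h N j \<le> \<theta> * level_weight \<beta> h N (Suc j)"
proof -
  let ?x = "level N (Suc j)" and ?a = "level_weight \<beta> h N j"
  have N: "real N > 0" using j by simp
  have "1 - ?x = 2 * (real N - real j - 1) / real N" "1 + ?x = 2 * (real j + 1) / real N"
    using N by (simp_all add: level_def field_simps)
  then have "(1 - ?x) / (1 + ?x) = (2 * (real N - real j - 1) / real N) / (2 * (real j + 1) / real N)"
    by simp
  also have "\<dots> = (real N - real j - 1) / (real j + 1)"
  proof -
    have "(2 * a / real N) / (2 * b / real N) = a / b" for a b
      using N by (cases "b = 0") (simp_all add: field_simps)
    then show ?thesis .
  qed
  finally have frac: "(1 - ?x) / (1 + ?x) \<le> (real N - real j) / (real j + 1)"
    by (simp add: divide_right_mono)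
  have ex: "exp (2 * (\<beta> * level N j + h) + 2 * \<beta> / real N)
      = exp (2 * (\<beta> * ?x + h)) * exp (- 2 * \<beta> / real N)"
    using N by (simp add: level_def exp_add[symmetric] field_simps)
  have r: "1 + \<eta> / 2 \<le> (1 - ?x) / (1 + ?x) * exp (2 * (\<beta> * ?x + h))"
    using level_ratio_ge[OF x _ gap \<eta>] abs_level_le_1[of "Suc j" N] j by simp
  have "?a * ((1 + \<eta> / 2) * exp (- 2 * \<beta> / real N))
      \<le> ?a * (((1 - ?x) / (1 + ?x) * exp (2 * (\<beta> * ?x + h))) * exp (- 2 * \<beta> / real N))"
    using r level_weight_nonneg by (intro mult_left_mono mult_right_mono) auto
  also have "\<dots> = ?a * ((1 - ?x) / (1 + ?x)) * (exp (2 * (\<beta> * ?x + h)) * exp (- 2 * \<beta> / real N))"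
    by (simp only: mult.assoc)
  also have "\<dots> \<le> ?a * ((real N - real j) / (real j + 1)) * (exp (2 * (\<beta> * ?x + h)) * exp (- 2 * \<beta> / real N))"
    using frac level_weight_nonneg by (intro mult_right_mono mult_left_mono) auto
  also have "\<dots> = level_weight \<beta> h N (Suc j)"
    by (simp only: level_weight_Suc[OF j] ex)
  finally have "?a * ((1 + \<eta> / 2) * exp (- 2 * \<beta> / real N)) \<le> level_weight \<beta> h N (Suc j)" .
  moreover have "\<theta> > 0"
  proof -
    have p: "(1 + \<eta> / 2) * exp (- 2 * \<beta> / real N) > 0" using \<eta> by simp
    with \<theta> have "0 < \<theta> * ((1 + \<eta> / 2) * exp (- 2 * \<beta> / real N))" by linarith
    then show ?thesis using p by (rule zero_less_mult_pos2)
  qed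
  ultimately have "\<theta> * (?a * ((1 + \<eta> / 2) * exp (- 2 * \<beta> / real N))) \<le> \<theta> * level_weight \<beta> h N (Suc j)"
    by (intro mult_left_mono) auto
  moreover have "?a \<le> \<theta> * (?a * ((1 + \<eta> / 2) * exp (- 2 * \<beta> / real N)))"
    using mult_left_mono[OF \<theta> level_weight_nonneg[of \<beta> h N j]] by (simp add: mult_ac)
  ultimately show ?thesis by linarith
qed

lemma le_power_mult_of_chain:
  fixes f :: "nat \<Rightarrow> real"
  assumes \<theta>: "\<theta> \<ge> 0" and step: "\<And>l. l < L \<Longrightarrow> f l \<le> \<theta> * f (Suc l)"
  shows "f 0 \<le> \<theta> ^ L * f L"
  using step
proof (induction L)
  case (Suc L)
  then have "f 0 \<le> \<theta> ^ L * f L" by simp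
  also have "\<dots> \<le> \<theta> ^ L * (\<theta> * f (Suc L))" using Suc.prems \<theta> by (intro mult_left_mono) auto
  finally show ?case by (simp add: mult_ac)
qed simp

lemma level_shift_le:
  assumes N: "N > 0" and L: "real L \<le> real N * d / 4" and l: "l \<le> L"
  shows "2 * real l / real N \<le> d / 2"
proof -
  have "real l \<le> real L" using l by simp
  then have "2 * real l \<le> real N * d / 2" using L by linarith
  then show ?thesis using N by (simp add: pos_divide_le_eq mult.commute)
qed

lemma level_decay_below:
  fixes a :: "nat \<Rightarrow> real"
  assumes N: "N > 0" and \<theta>: "\<theta> \<ge> 0" and a: "\<And>k. a k \<ge> 0"
    and step: "\<And>k. k < N \<Longrightarrow> 0 \<le> level N (Suc k) \<Longrightarrow> level N (Suc k) \<le> y0 - d / 2 \<Longrightarrow> a k \<le> \<theta> * a (Suc k)"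
    and y0: "y0 < 1" and d: "d > 0" and j: "0 \<le> level N j" "level N j \<le> y0 - d"
    and L: "real L \<le> real N * d / 4"
  shows "a j \<le> \<theta> ^ L * (\<Sum>k\<le>N. a k)"
proof -
  have lev: "0 \<le> level N (j + l) \<and> level N (j + l) \<le> y0 - d / 2" if "l \<le> L" for l
    using level_add[OF N, of j l] level_shift_le[OF N L that] j by simp
  have jL: "j + L < N"
    using lev[of L] y0 d level_less_1_iff[OF N] by force
  have "a (j + 0) \<le> \<theta> ^ L * a (j + L)"
  proof (rule le_power_mult_of_chain[where f = "\<lambda>l. a (j + l)", OF \<theta>])
    fix l assume "l < L"
    then show "a (j + l) \<le> \<theta> * a (j + Suc l)"
      using step[of "j + l"] lev[of "Suc l"] jL by simp
  qed
  also have "\<dots> \<le> \<theta> ^ L * (\<Sum>k\<le>N. a k)"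
    using jL a \<theta> by (intro mult_left_mono member_le_sum) auto
  finally show ?thesis by simp
qed

lemma level_decay_above:
  fixes a :: "nat \<Rightarrow> real"
  assumes N: "N > 0" and \<theta>: "\<theta> \<ge> 0" and a: "\<And>k. a k \<ge> 0"
    and step: "\<And>k. k < N \<Longrightarrow> y0 + d / 2 \<le> level N k \<Longrightarrow> a (Suc k) \<le> \<theta> * a k"
    and y0: "0 \<le> y0" and d: "d > 0" and j: "j \<le> N" "y0 + d \<le> level N j"
    and L: "real L \<le> real N * d / 4"
  shows "a j \<le> \<theta> ^ L * (\<Sum>k\<le>N. a k)"
proof -
  have "real N * (y0 + d) \<le> 2 * real j - real N"
    using j N by (simp add: level_def le_divide_eq mult.commute)
  moreover have "real N * (y0 + d) = real N * y0 + real N * d" by (simp add: algebra_simps)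
  moreover have "real N * y0 \<ge> 0" using y0 by simp
  ultimately have "real N * d \<le> 2 * real j - real N" by linarith
  then have Lj: "L \<le> j" using L d by (simp add: mult_nonneg_nonneg)
  have lev: "y0 + d / 2 \<le> level N (j - l)" if "l \<le> L" for l
    using level_add[OF N, of "j - l" l] level_shift_le[OF N L that] that Lj j by simp
  have "a (j - 0) \<le> \<theta> ^ L * a (j - L)"
  proof (rule le_power_mult_of_chain[where f = "\<lambda>l. a (j - l)", OF \<theta>])
    fix l assume "l < L"
    then show "a (j - l) \<le> \<theta> * a (j - Suc l)"
      using step[of "j - Suc l"] lev[of "Suc l"] Lj j Suc_diff_Suc[of l j] by simp
  qed
  also have "\<dots> \<le> \<theta> ^ L * (\<Sum>k\<le>N. a k)"
    using j a \<theta> by (intro mult_left_mono member_le_sum) auto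
  finally show ?thesis by simp
qed

lemma level_decay:
  fixes a :: "nat \<Rightarrow> real"
  assumes N: "N > 0" and \<theta>: "\<theta> \<ge> 0" and a: "\<And>k. a k \<ge> 0"
    and below: "\<And>k. k < N \<Longrightarrow> 0 \<le> level N (Suc k) \<Longrightarrow> level N (Suc k) \<le> y0 - d / 2 \<Longrightarrow> a k \<le> \<theta> * a (Suc k)"
    and above: "\<And>k. k < N \<Longrightarrow> y0 + d / 2 \<le> level N k \<Longrightarrow> a (Suc k) \<le> \<theta> * a k"
    and y0: "0 \<le> y0" "y0 < 1" and d: "d > 0" and L: "real L \<le> real N * d / 4"
    and j: "j \<le> N" "0 \<le> level N j" "\<bar>level N j - y0\<bar> > d"
  shows "a j \<le> \<theta> ^ L * (\<Sum>k\<le>N. a k)"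
proof (cases "level N j \<le> y0 - d")
  case True
  show ?thesis by (rule level_decay_below[where a = a, OF N \<theta> a below y0(2) d j(2) True L])
next
  case False
  then have "y0 + d \<le> level N j" using j(3) by linarith
  with level_decay_above[where a = a, OF N \<theta> a above y0(1) d j(1) _ L] show ?thesis by blast
qed

text \<open>The spin flip \<open>j \<mapsto> N - j\<close> costs the factor \<open>exp (2 h (2 j - N))\<close>.\<close>
lemma level_weight_le_near_reflection:
  assumes h: "h > 0" and N: "N > 0" and j: "j \<le> N" "level N j \<le> - (y0 / 2)"
  shows "level_weight \<beta> h N j \<le> exp (- h * real N * y0) * (\<Sum>k\<le>N. level_weight \<beta> h N k)"
proof -
  have "2 * real j - real N \<le> - (y0 / 2) * real N"
    using j(2) N by (simp add: level_def divide_le_eq)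
  then have "2 * h * (2 * real j - real N) \<le> - h * real N * y0"
    using mult_left_mono[of _ _ "2 * h"] h by (fastforce simp: algebra_simps)
  then have "level_weight \<beta> h N j \<le> level_weight \<beta> h N (N - j) * exp (- h * real N * y0)"
    using level_weight_reflect[OF j(1)] level_weight_nonneg[of \<beta> h N "N - j"] by (simp add: mult_left_mono)
  also have "\<dots> \<le> (\<Sum>k\<le>N. level_weight \<beta> h N k) * exp (- h * real N * y0)"
    using level_weight_le_sum[of "N - j" N \<beta> h] by (intro mult_right_mono) auto
  finally show ?thesis by (simp add: mult.commute)
qed

lemma level_weight_far:
  assumes h: "h \<ge> 0" and y0: "mf_stable_root \<beta> h y0"
    and d: "d > 0" "h > 0 \<Longrightarrow> d \<le> y0 / 2" and N: "N > 0" and \<theta>: "\<theta> \<ge> 0"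
    and below: "\<And>k. k < N \<Longrightarrow> 0 \<le> level N (Suc k) \<Longrightarrow> level N (Suc k) \<le> y0 - d / 2
      \<Longrightarrow> level_weight \<beta> h N k \<le> \<theta> * level_weight \<beta> h N (Suc k)"
    and above: "\<And>k. k < N \<Longrightarrow> y0 + d / 2 \<le> level N k
      \<Longrightarrow> level_weight \<beta> h N (Suc k) \<le> \<theta> * level_weight \<beta> h N k"
    and L: "real L \<le> real N * d / 4" and j: "j \<le> N" "\<bar>level N j - y0\<bar> > d"
  shows "level_weight \<beta> h N j
    \<le> (\<theta> ^ L + (if h > 0 then exp (- h * real N * y0) else 0)) * (\<Sum>k\<le>N. level_weight \<beta> h N k)"
proof -
  let ?a = "level_weight \<beta> h N" and ?S = "\<Sum>k\<le>N. level_weight \<beta> h N k"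
  have y0': "0 \<le> y0" "y0 < 1" "h = 0 \<Longrightarrow> y0 = 0" using y0 by (auto simp: mf_stable_root_def)
  have decay: "?a i \<le> \<theta> ^ L * ?S" if "i \<le> N" "0 \<le> level N i" "\<bar>level N i - y0\<bar> > d" for i
    by (rule level_decay[where a = ?a, OF N \<theta> level_weight_nonneg below above y0'(1,2) d(1) L that])
  have "?a j \<le> \<theta> ^ L * ?S \<or> (h > 0 \<and> ?a j \<le> exp (- h * real N * y0) * ?S)"
  proof (cases "level N j \<ge> 0")
    case True
    then show ?thesis using decay[OF j(1) True j(2)] by blast
  next
    case False
    then have flip: "level N (N - j) = - level N j" "0 \<le> level N (N - j)" using level_diff[OF j(1)] by auto
    show ?thesis
    proof (cases "\<bar>level N (N - j) - y0\<bar> > d")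
      case True
      have "2 * real j - real N \<le> 0" using False N by (simp add: level_def zero_le_divide_iff)
      then have "?a j \<le> ?a (N - j)"
        using level_weight_reflect[OF j(1)] h level_weight_nonneg[of \<beta> h N "N - j"]
        by (simp add: mult_left_le mult_nonneg_nonpos)
      then show ?thesis using decay[of "N - j"] True flip by force
    next
      case False
      then have near: "\<bar>- level N j - y0\<bar> \<le> d" using flip by simp
      then have "h > 0" using j(2) y0'(3) h \<open>\<not> level N j \<ge> 0\<close> by force
      moreover have "level N j \<le> - (y0 / 2)" using near d(2) calculation by linarith
      ultimately show ?thesis using level_weight_le_near_reflection[OF _ N j(1)] by blast
    qed
  qed
  moreover have "?S > 0" by (rule sum_level_weight_pos)
  ultimately show ?thesis using \<theta> by (auto simp: distrib_right add_increasing2 add_increasing)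
qed

section \<open>Concentration of the magnetization\<close>

lemma eventually_level_ratio_thresholds:
  assumes \<eta>: "\<eta> > 0"
  obtains \<theta> where "0 < \<theta>" "\<theta> < 1"
    "\<forall>\<^sub>F N in sequentially. (1 - \<eta> / 2) * exp (2 * \<beta> / real N) \<le> \<theta>
       \<and> 1 \<le> \<theta> * ((1 + \<eta> / 2) * exp (- 2 * \<beta> / real N))"
proof -
  define \<theta> where "\<theta> = (1 + max (1 - \<eta> / 2) (1 / (1 + \<eta> / 2))) / 2"
  have \<theta>: "0 < \<theta>" "\<theta> < 1" "1 - \<eta> / 2 < \<theta>" "1 < \<theta> * (1 + \<eta> / 2)"
    using \<eta> by (auto simp: \<theta>_def field_simps add_pos_pos)
  have "(\<lambda>N. (1 - \<eta> / 2) * exp (2 * \<beta> / real N)) \<longlonglongrightarrow> (1 - \<eta> / 2) * exp 0"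
    by (intro tendsto_intros)
  from order_tendstoD(2)[OF this, of \<theta>] \<theta>(3)
  have "\<forall>\<^sub>F N in sequentially. (1 - \<eta> / 2) * exp (2 * \<beta> / real N) < \<theta>" by simp
  then have ev1: "\<forall>\<^sub>F N in sequentially. (1 - \<eta> / 2) * exp (2 * \<beta> / real N) \<le> \<theta>"
    by (rule eventually_mono) simp
  have "(\<lambda>N. \<theta> * ((1 + \<eta> / 2) * exp (- 2 * \<beta> / real N))) \<longlonglongrightarrow> \<theta> * ((1 + \<eta> / 2) * exp 0)"
    by (intro tendsto_intros)
  from order_tendstoD(1)[OF this, of 1] \<theta>(4)
  have "\<forall>\<^sub>F N in sequentially. 1 < \<theta> * ((1 + \<eta> / 2) * exp (- 2 * \<beta> / real N))" by simp
  then have ev2: "\<forall>\<^sub>F N in sequentially. 1 \<le> \<theta> * ((1 + \<eta> / 2) * exp (- 2 * \<beta> / real N))"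
    by (rule eventually_mono) simp
  show ?thesis using that[OF \<theta>(1,2) eventually_conj[OF ev1 ev2]] .
qed

lemma tendsto_Suc_mult_power_zero:
  fixes \<kappa> :: real
  assumes "0 < \<kappa>" "\<kappa> < 1"
  shows "(\<lambda>N. (real N + 1) * \<kappa> ^ N) \<longlonglongrightarrow> 0"
proof -
  have "(\<lambda>N. real N * \<kappa> ^ N + \<kappa> ^ N) \<longlonglongrightarrow> 0 + 0"
    using powser_times_n_limit_0[of \<kappa>] assms by (intro tendsto_add LIMSEQ_power_zero) auto
  then show ?thesis by (simp add: algebra_simps)
qed

lemma tendsto_Suc_mult_power_nat_floor:
  fixes \<theta> c :: real
  assumes \<theta>: "0 < \<theta>" "\<theta> < 1" and c: "c > 0"
  shows "(\<lambda>N. (real N + 1) * \<theta> ^ nat \<lfloor>real N * c\<rfloor>) \<longlonglongrightarrow> 0"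
proof -
  let ?\<kappa> = "\<theta> powr c"
  have \<kappa>: "0 < ?\<kappa>" "?\<kappa> < 1" using \<theta> c powr_less_mono2[of c \<theta> 1] by auto
  have bound: "(real N + 1) * \<theta> ^ nat \<lfloor>real N * c\<rfloor> \<le> (1 / \<theta>) * ((real N + 1) * ?\<kappa> ^ N)" for N
  proof -
    have "real N * c - 1 \<le> real (nat \<lfloor>real N * c\<rfloor>)" using c by linarith
    then have "\<theta> ^ nat \<lfloor>real N * c\<rfloor> \<le> \<theta> powr (real N * c - 1)"
      using \<theta> by (simp add: powr_realpow[symmetric] powr_mono')
    also have "\<dots> = ?\<kappa> ^ N / \<theta>"
      using \<theta> by (simp add: powr_diff powr_powr powr_realpow[symmetric] mult.commute)
    finally have "\<theta> ^ nat \<lfloor>real N * c\<rfloor> \<le> ?\<kappa> ^ N / \<theta>" .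
    from mult_left_mono[OF this, of "real N + 1"] show ?thesis by simp
  qed
  show ?thesis
  proof (rule tendsto_sandwich[where f = "\<lambda>_. 0" and h = "\<lambda>N. (1 / \<theta>) * ((real N + 1) * ?\<kappa> ^ N)"])
    show "(\<lambda>N. (1 / \<theta>) * ((real N + 1) * ?\<kappa> ^ N)) \<longlonglongrightarrow> 0"
      using tendsto_mult_right_zero[OF tendsto_Suc_mult_power_zero[OF \<kappa>], of "1 / \<theta>"] .
  qed (use bound \<theta> in auto)
qed

lemma level_weight_tail:
  assumes b: "\<beta> > 0" and h: "h \<ge> 0" and y0: "mf_stable_root \<beta> h y0"
    and d: "d > 0" "h > 0 \<Longrightarrow> d \<le> y0 / 2"
  obtains c where "(\<lambda>N. (real N + 1) * c N) \<longlonglongrightarrow> 0" "\<And>N. c N \<ge> 0"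
    "\<forall>\<^sub>F N in sequentially. \<forall>j\<le>N. \<bar>level N j - y0\<bar> > d
       \<longrightarrow> level_weight \<beta> h N j \<le> c N * (\<Sum>k\<le>N. level_weight \<beta> h N k)"
proof -
  obtain \<eta> where \<eta>: "\<eta> > 0"
    and lo: "\<And>y. 0 \<le> y \<Longrightarrow> y \<le> y0 - d / 2 \<Longrightarrow> mf_gap \<beta> h y \<ge> \<eta>"
    and up: "\<And>y. y0 + d / 2 \<le> y \<Longrightarrow> y \<le> 1 \<Longrightarrow> mf_gap \<beta> h y \<le> - \<eta>"
    using mf_gap_bounded_away[OF y0, of "d / 2"] d by auto
  obtain \<theta> where \<theta>: "0 < \<theta>" "\<theta> < 1" and ev_ratio:
    "\<forall>\<^sub>F N in sequentially. (1 - \<eta> / 2) * exp (2 * \<beta> / real N) \<le> \<theta>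
       \<and> 1 \<le> \<theta> * ((1 + \<eta> / 2) * exp (- 2 * \<beta> / real N))"
    using eventually_level_ratio_thresholds[OF \<eta>] by blast
  define L where "L N = nat \<lfloor>real N * (d / 4)\<rfloor>" for N
  define c where "c N = \<theta> ^ L N + (if h > 0 then exp (- h * real N * y0) else 0)" for N
  have "exp (- h * real N * y0) = exp (- h * y0) ^ N" for N
    by (simp add: exp_of_nat_mult[symmetric] algebra_simps)
  then have "(\<lambda>N. (real N + 1) * (if h > 0 then exp (- h * real N * y0) else 0)) \<longlonglongrightarrow> 0"
    using tendsto_Suc_mult_power_zero[of "exp (- h * y0)"] y0 h
    by (cases "h > 0") (auto simp: mf_stable_root_def)
  then have "(\<lambda>N. (real N + 1) * c N) \<longlonglongrightarrow> 0 + 0"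
    using tendsto_Suc_mult_power_nat_floor[OF \<theta>, of "d / 4"] d
    unfolding c_def L_def distrib_left by (intro tendsto_add) auto
  moreover have "c N \<ge> 0" for N using \<theta> by (simp add: c_def)
  moreover have "\<forall>\<^sub>F N in sequentially. \<forall>j\<le>N. \<bar>level N j - y0\<bar> > d
       \<longrightarrow> level_weight \<beta> h N j \<le> c N * (\<Sum>k\<le>N. level_weight \<beta> h N k)"
    using ev_ratio eventually_gt_at_top[of "0::nat"]
  proof eventually_elim
    case (elim N)
    have below: "level_weight \<beta> h N k \<le> \<theta> * level_weight \<beta> h N (Suc k)"
      if "k < N" "0 \<le> level N (Suc k)" "level N (Suc k) \<le> y0 - d / 2" for k
      using level_weight_le_Suc[OF that(1,2) lo[OF that(2,3)] \<eta>] elim by blast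
    have above: "level_weight \<beta> h N (Suc k) \<le> \<theta> * level_weight \<beta> h N k"
      if "k < N" "y0 + d / 2 \<le> level N k" for k
    proof -
      have "0 \<le> level N k" using that(2) y0 d by (auto simp: mf_stable_root_def)
      moreover have "level N k \<le> 1" using abs_level_le_1[of k N] that(1) by simp
      ultimately show ?thesis
        using level_weight_Suc_le[OF that(1) _ up[OF that(2)] \<eta>] elim by blast
    qed
    have L: "real (L N) \<le> real N * d / 4" using of_nat_floor[of "real N * (d / 4)"] d by (simp add: L_def)
    show ?case
      using level_weight_far[OF h y0 d elim(2) less_imp_le[OF \<theta>(1)] below above L] by (simp add: c_def)
  qed
  ultimately show ?thesis by (intro that) auto
qed

lemma level_mean_dev_le:
  fixes a :: "nat \<Rightarrow> real"
  assumes a: "\<And>k. a k \<ge> 0" and S: "(\<Sum>k\<le>N. a k) > 0" and N: "N > 0" and y0: "\<bar>y0\<bar> \<le> 1"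
    and d: "d \<ge> 0" and c: "c \<ge> 0"
    and far: "\<And>j. j \<le> N \<Longrightarrow> \<bar>level N j - y0\<bar> > d \<Longrightarrow> a j \<le> c * (\<Sum>k\<le>N. a k)"
  shows "(\<Sum>j\<le>N. a j * \<bar>level N j - y0\<bar>) / (\<Sum>k\<le>N. a k) \<le> d + 2 * ((real N + 1) * c)"
proof -
  let ?S = "\<Sum>k\<le>N. a k"
  have "a j * \<bar>level N j - y0\<bar> \<le> d * a j + 2 * c * ?S" if j: "j \<le> N" for j
  proof (cases "\<bar>level N j - y0\<bar> > d")
    case True
    have "\<bar>level N j - y0\<bar> \<le> 2" using abs_level_le_1[OF j N] y0 by linarith
    then have "a j * \<bar>level N j - y0\<bar> \<le> 2 * a j" using a[of j] by (simp add: mult_left_mono mult.commute)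
    also have "\<dots> \<le> 2 * c * ?S" using far[OF j True] by simp
    finally show ?thesis using mult_nonneg_nonneg[OF d a[of j]] by linarith
  next
    case False
    then have "a j * \<bar>level N j - y0\<bar> \<le> a j * d" using a[of j] by (intro mult_left_mono) auto
    then have "a j * \<bar>level N j - y0\<bar> \<le> d * a j" by (simp add: mult.commute)
    then show ?thesis using c S by (simp add: add_increasing2)
  qed
  then have "(\<Sum>j\<le>N. a j * \<bar>level N j - y0\<bar>) \<le> (\<Sum>j\<le>N. d * a j + 2 * c * ?S)"
    by (intro sum_mono) auto
  also have "\<dots> = (d + 2 * ((real N + 1) * c)) * ?S"
    by (simp add: sum.distrib sum_distrib_left algebra_simps)
  finally show ?thesis using S by (simp add: pos_divide_le_eq)
qed

lemma level_weight_concentration_nonneg_field: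
  assumes b: "\<beta> > 0" and h: "h \<ge> 0" and y0: "mf_stable_root \<beta> h y0"
  shows "(\<lambda>N. (\<Sum>j\<le>N. level_weight \<beta> h N j * \<bar>level N j - y0\<bar>) / (\<Sum>j\<le>N. level_weight \<beta> h N j))
    \<longlonglongrightarrow> 0"
proof (rule LIMSEQ_I)
  fix r :: real assume r: "r > 0"
  define d where "d = min (r / 2) (if h > 0 then y0 / 2 else 1)"
  have y0': "0 \<le> y0" "y0 < 1" "h > 0 \<Longrightarrow> y0 > 0" using y0 h by (auto simp: mf_stable_root_def)
  have d: "d > 0" "h > 0 \<Longrightarrow> d \<le> y0 / 2" "d \<le> r / 2" using r y0' by (auto simp: d_def)
  obtain c where lim: "(\<lambda>N. (real N + 1) * c N) \<longlonglongrightarrow> 0" and c: "\<And>N. c N \<ge> 0"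
    and far: "\<forall>\<^sub>F N in sequentially. \<forall>j\<le>N. \<bar>level N j - y0\<bar> > d
       \<longrightarrow> level_weight \<beta> h N j \<le> c N * (\<Sum>k\<le>N. level_weight \<beta> h N k)"
    using level_weight_tail[OF b h y0 d(1,2)] by blast
  have "\<forall>\<^sub>F N in sequentially. (real N + 1) * c N < r / 4"
    using order_tendstoD(2)[OF lim, of "r / 4"] r by simp
  then have "\<forall>\<^sub>F N in sequentially.
      norm ((\<Sum>j\<le>N. level_weight \<beta> h N j * \<bar>level N j - y0\<bar>) / (\<Sum>j\<le>N. level_weight \<beta> h N j) - 0) < r"
    using far eventually_gt_at_top[of "0::nat"]
  proof eventually_elim
    case (elim N)
    have "(\<Sum>j\<le>N. level_weight \<beta> h N j * \<bar>level N j - y0\<bar>) / (\<Sum>j\<le>N. level_weight \<beta> h N j)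
        \<le> d + 2 * ((real N + 1) * c N)"
      using elim y0' d c sum_level_weight_pos
      by (intro level_mean_dev_le level_weight_nonneg) auto
    moreover have "0 \<le> (\<Sum>j\<le>N. level_weight \<beta> h N j * \<bar>level N j - y0\<bar>) / (\<Sum>j\<le>N. level_weight \<beta> h N j)"
      using level_weight_nonneg by (intro divide_nonneg_nonneg sum_nonneg mult_nonneg_nonneg) auto
    ultimately show ?case using elim d by simp
  qed
  then show "\<exists>no. \<forall>N\<ge>no. norm ((\<Sum>j\<le>N. level_weight \<beta> h N j * \<bar>level N j - y0\<bar>)
      / (\<Sum>j\<le>N. level_weight \<beta> h N j) - 0) < r"
    by (simp add: eventually_sequentially)
qed

lemma level_weight_concentration:
  assumes b: "\<beta> > 0" and c: "h \<noteq> 0 \<or> \<beta> \<le> 1"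
  shows "\<bar>m0 \<beta> h\<bar> \<le> 1"
    and "(\<lambda>N. (\<Sum>j\<le>N. level_weight \<beta> h N j * \<bar>level N j - m0 \<beta> h\<bar>) / (\<Sum>j\<le>N. level_weight \<beta> h N j))
      \<longlonglongrightarrow> 0"
proof -
  have "\<bar>m0 \<beta> h\<bar> \<le> 1 \<and> (\<lambda>N. (\<Sum>j\<le>N. level_weight \<beta> h N j * \<bar>level N j - m0 \<beta> h\<bar>)
    / (\<Sum>j\<le>N. level_weight \<beta> h N j)) \<longlonglongrightarrow> 0"
  proof (cases "h \<ge> 0")
    case True
    obtain y0 where y0: "mf_stable_root \<beta> h y0"
      using mf_stable_root_exists[OF b True] c True by force
    then have "m0 \<beta> h = y0" by (rule m0_eq_mf_stable_root[OF b True])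
    then show ?thesis
      using level_weight_concentration_nonneg_field[OF b True y0] y0 by (simp add: mf_stable_root_def)
  next
    case False
    obtain y0 where y0: "mf_stable_root \<beta> (- h) y0"
      using mf_stable_root_exists[OF b, of "- h"] False by force
    then have "m0 \<beta> h = - y0" using m0_uminus_eq[OF b _ y0] False by simp
    moreover have "(\<Sum>j\<le>N. level_weight \<beta> h N j * \<bar>level N j - - y0\<bar>)
        = (\<Sum>j\<le>N. level_weight \<beta> (- h) N j * \<bar>level N j - y0\<bar>)"
      and "(\<Sum>j\<le>N. level_weight \<beta> h N j) = (\<Sum>j\<le>N. level_weight \<beta> (- h) N j)" for N
      using sum_level_weight_uminus[of \<beta> h N "\<lambda>x. \<bar>x + y0\<bar>"] sum_level_weight_uminus[of \<beta> h N "\<lambda>x. 1"]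
      by (simp_all add: abs_minus_commute)
    ultimately show ?thesis
      using level_weight_concentration_nonneg_field[OF b _ y0] y0 False by (simp add: mf_stable_root_def)
  qed
  then show "\<bar>m0 \<beta> h\<bar> \<le> 1" and "(\<lambda>N. (\<Sum>j\<le>N. level_weight \<beta> h N j * \<bar>level N j - m0 \<beta> h\<bar>)
    / (\<Sum>j\<le>N. level_weight \<beta> h N j)) \<longlonglongrightarrow> 0" by auto
qed

lemma cw_expect_fun_total:
  "cw_expect \<beta> h N (\<lambda>s. g (\<Sum>i<N. s i))
    = (\<Sum>j\<le>N. level_weight \<beta> h N j * g (2 * real j - real N)) / (\<Sum>j\<le>N. level_weight \<beta> h N j)"
proof -
  have "(\<Sum>s\<in>spin_configs N. cw_weight \<beta> h N s * g (\<Sum>i<N. s i))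
      = (\<Sum>j\<le>N. level_weight \<beta> h N j * g (2 * real j - real N))"
    using sum_spin_configs_by_total[of "\<lambda>k. weight_of_total \<beta> h N k * g k" N]
    by (simp add: cw_weight_eq_weight_of_total level_weight_def mult.assoc)
  moreover have "cw_Z \<beta> h N = (\<Sum>j\<le>N. level_weight \<beta> h N j)"
    using sum_spin_configs_by_total[of "weight_of_total \<beta> h N" N]
    by (simp add: cw_Z_def cw_weight_eq_weight_of_total level_weight_def)
  ultimately show ?thesis by (simp add: cw_expect_def)
qed

lemma cw_expect_abs_magnetization_dev_tendsto:
  assumes "\<beta> > 0" "h \<noteq> 0 \<or> \<beta> \<le> 1"
  shows "(\<lambda>N. cw_expect \<beta> h N (\<lambda>s. \<bar>magnetization N s - m0 \<beta> h\<bar>)) \<longlonglongrightarrow> 0"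
proof -
  have "cw_expect \<beta> h N (\<lambda>s. \<bar>magnetization N s - m0 \<beta> h\<bar>)
      = (\<Sum>j\<le>N. level_weight \<beta> h N j * \<bar>level N j - m0 \<beta> h\<bar>) / (\<Sum>j\<le>N. level_weight \<beta> h N j)" for N
    using cw_expect_fun_total[of \<beta> h N "\<lambda>k. \<bar>k / real N - m0 \<beta> h\<bar>"]
    by (simp add: magnetization_def level_def)
  then show ?thesis using level_weight_concentration(2)[OF assms] by simp
qed

lemma cw_expect_tendsto_of_abs_dev:
  assumes "(\<lambda>N. cw_expect \<beta> h N (\<lambda>s. \<bar>f N s - m\<bar>)) \<longlonglongrightarrow> 0"
  shows "(\<lambda>N. cw_expect \<beta> h N (f N)) \<longlonglongrightarrow> m"
proof -
  have "(\<lambda>N. cw_expect \<beta> h N (f N) - m) \<longlonglongrightarrow> 0"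
  proof (rule Lim_null_comparison[OF always_eventually assms], intro allI)
    fix N
    show "norm (cw_expect \<beta> h N (f N) - m) \<le> cw_expect \<beta> h N (\<lambda>s. \<bar>f N s - m\<bar>)"
      using abs_cw_expect_le[of \<beta> h N "\<lambda>s. f N s - m"] by (simp add: cw_expect_diff cw_expect_const)
  qed
  then show ?thesis by (simp add: LIM_zero_iff)
qed

lemma cw_expect_spin_tendsto:
  assumes "\<beta> > 0" "h \<noteq> 0 \<or> \<beta> \<le> 1"
  shows "(\<lambda>N. cw_expect \<beta> h N (\<lambda>s. s 0)) \<longlonglongrightarrow> m0 \<beta> h"
proof -
  have lim: "(\<lambda>N. cw_expect \<beta> h N (magnetization N)) \<longlonglongrightarrow> m0 \<beta> h"
    using cw_expect_abs_magnetization_dev_tendsto[OF assms] by (rule cw_expect_tendsto_of_abs_dev)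
  have ev: "\<forall>\<^sub>F N in sequentially. cw_expect \<beta> h N (magnetization N) = cw_expect \<beta> h N (\<lambda>s. s 0)"
    using eventually_gt_at_top[of "0::nat"] by eventually_elim (rule cw_expect_magnetization)
  show ?thesis using tendsto_cong[OF ev] lim by simp
qed

lemma cw_expect_magnetization_sq_tendsto:
  assumes "\<beta> > 0" "h \<noteq> 0 \<or> \<beta> \<le> 1"
  shows "(\<lambda>N. cw_expect \<beta> h N (\<lambda>s. (magnetization N s)^2)) \<longlonglongrightarrow> (m0 \<beta> h)^2"
proof (rule cw_expect_tendsto_of_abs_dev)
  let ?m = "m0 \<beta> h"
  have bound: "cw_expect \<beta> h N (\<lambda>s. \<bar>(magnetization N s)^2 - ?m^2\<bar>)
      \<le> 2 * cw_expect \<beta> h N (\<lambda>s. \<bar>magnetization N s - ?m\<bar>)" for N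
  proof -
    have "\<bar>(magnetization N s)^2 - ?m^2\<bar> \<le> 2 * \<bar>magnetization N s - ?m\<bar>" if "s \<in> spin_configs N" for s
    proof -
      have "\<bar>(magnetization N s)^2 - ?m^2\<bar> = \<bar>magnetization N s - ?m\<bar> * \<bar>magnetization N s + ?m\<bar>"
        by (simp add: power2_eq_square abs_mult[symmetric] algebra_simps)
      also have "\<dots> \<le> \<bar>magnetization N s - ?m\<bar> * 2"
        using abs_magnetization_le_1[OF that] level_weight_concentration(1)[OF assms]
        by (intro mult_left_mono) auto
      finally show ?thesis by simp
    qed
    then have "cw_expect \<beta> h N (\<lambda>s. \<bar>(magnetization N s)^2 - ?m^2\<bar>)
        \<le> cw_expect \<beta> h N (\<lambda>s. 2 * \<bar>magnetization N s - ?m\<bar>)"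
      by (rule cw_expect_mono)
    then show ?thesis by (simp add: cw_expect_cmult)
  qed
  show "(\<lambda>N. cw_expect \<beta> h N (\<lambda>s. \<bar>(magnetization N s)^2 - ?m^2\<bar>)) \<longlonglongrightarrow> 0"
  proof (rule Lim_null_comparison[OF always_eventually], intro allI)
    fix N
    have "0 \<le> cw_expect \<beta> h N (\<lambda>s. \<bar>(magnetization N s)^2 - ?m^2\<bar>)"
      using cw_expect_mono[of N "\<lambda>_. 0" "\<lambda>s. \<bar>(magnetization N s)^2 - ?m^2\<bar>" \<beta> h]
      by (simp add: cw_expect_const)
    then show "norm (cw_expect \<beta> h N (\<lambda>s. \<bar>(magnetization N s)^2 - ?m^2\<bar>))
        \<le> 2 * cw_expect \<beta> h N (\<lambda>s. \<bar>magnetization N s - ?m\<bar>)"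
      using bound[of N] by simp
  next
    show "(\<lambda>N. 2 * cw_expect \<beta> h N (\<lambda>s. \<bar>magnetization N s - ?m\<bar>)) \<longlonglongrightarrow> 0"
      using tendsto_mult_right_zero[OF cw_expect_abs_magnetization_dev_tendsto[OF assms], of 2] .
  qed
qed

lemma cw_expect_spin_pair_tendsto:
  assumes "\<beta> > 0" "h \<noteq> 0 \<or> \<beta> \<le> 1"
  shows "(\<lambda>N. cw_expect \<beta> h N (\<lambda>s. s 0 * s 1)) \<longlonglongrightarrow> (m0 \<beta> h)^2"
proof -
  let ?m = "m0 \<beta> h" and ?A = "\<lambda>N. cw_expect \<beta> h N (\<lambda>s. (magnetization N s)^2)"
  have inv: "(\<lambda>N. 1 / (real N - 1)) \<longlonglongrightarrow> 0"
    by (rule LIMSEQ_offset[where k = 1]) (simp add: lim_inverse_n')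
  have lim: "(\<lambda>N. ?A N + (?A N - 1) * (1 / (real N - 1))) \<longlonglongrightarrow> ?m^2 + (?m^2 - 1) * 0"
    by (intro tendsto_intros cw_expect_magnetization_sq_tendsto[OF assms] inv)
  have ev: "\<forall>\<^sub>F N in sequentially. ?A N + (?A N - 1) * (1 / (real N - 1))
      = cw_expect \<beta> h N (\<lambda>s. s 0 * s 1)"
    using eventually_ge_at_top[of "2::nat"]
  proof eventually_elim
    case (elim N)
    then have "real N - 1 > 0" by simp
    then show ?case using cw_expect_magnetization_sq[of N \<beta> h] elim by (simp add: field_simps)
  qed
  show ?thesis using tendsto_cong[OF ev] lim by simp
qed

section \<open>Independent copies and pattern frequencies\<close>

definition multi_expect :: "real \<Rightarrow> ('m::finite \<Rightarrow> real) \<Rightarrow> nat \<Rightarrow> (('m \<Rightarrow> nat \<Rightarrow> real) \<Rightarrow> real) \<Rightarrow> real" where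
  "multi_expect \<beta> hv N f = (\<Sum>S\<in>multi_configs N. cw_prob \<beta> hv N S * f S)"

lemma multi_configs_eq_PiE: "multi_configs N = PiE UNIV (\<lambda>_. spin_configs N)"
  by (simp add: multi_configs_def PiE_UNIV_domain Pi_def)

lemma finite_multi_configs: "finite (multi_configs N :: ('m::finite \<Rightarrow> nat \<Rightarrow> real) set)"
  unfolding multi_configs_eq_PiE by (intro finite_PiE) auto

lemma cw_prob_nonneg: "cw_prob \<beta> hv N S \<ge> 0"
  unfolding cw_prob_def using cw_Z_pos cw_weight_pos by (intro prod_nonneg) (auto intro: less_imp_le)

lemma multi_expect_prod:
  "multi_expect \<beta> (hv :: 'm::finite \<Rightarrow> real) N (\<lambda>S. \<Prod>\<mu>\<in>UNIV. f \<mu> (S \<mu>))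
    = (\<Prod>\<mu>\<in>UNIV. cw_expect \<beta> (hv \<mu>) N (f \<mu>))"
proof -
  have "(\<Prod>\<mu>\<in>UNIV. cw_expect \<beta> (hv \<mu>) N (f \<mu>))
      = (\<Prod>\<mu>\<in>UNIV. \<Sum>x\<in>spin_configs N. cw_weight \<beta> (hv \<mu>) N x / cw_Z \<beta> (hv \<mu>) N * f \<mu> x)"
    by (simp add: cw_expect_def sum_divide_distrib)
  also have "\<dots> = (\<Sum>S\<in>PiE UNIV (\<lambda>_. spin_configs N).
      \<Prod>\<mu>\<in>UNIV. cw_weight \<beta> (hv \<mu>) N (S \<mu>) / cw_Z \<beta> (hv \<mu>) N * f \<mu> (S \<mu>))"
    by (rule prod_sum_PiE) auto
  also have "\<dots> = multi_expect \<beta> hv N (\<lambda>S. \<Prod>\<mu>\<in>UNIV. f \<mu> (S \<mu>))"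
    unfolding multi_expect_def multi_configs_eq_PiE cw_prob_def by (simp only: prod.distrib)
  finally show ?thesis by simp
qed

lemma multi_expect_const: "multi_expect \<beta> (hv :: 'm::finite \<Rightarrow> real) N (\<lambda>S. c) = c"
proof -
  have "(\<Sum>S\<in>multi_configs N. cw_prob \<beta> hv N S) = 1"
    using multi_expect_prod[of \<beta> hv N "\<lambda>_ _. 1"] by (simp add: multi_expect_def cw_expect_const)
  then show ?thesis by (simp add: multi_expect_def sum_distrib_right[symmetric])
qed

lemma multi_expect_add: "multi_expect \<beta> hv N (\<lambda>S. f S + g S) = multi_expect \<beta> hv N f + multi_expect \<beta> hv N g"
  by (simp add: multi_expect_def distrib_left sum.distrib)

lemma multi_expect_cmult: "multi_expect \<beta> hv N (\<lambda>S. c * f S) = c * multi_expect \<beta> hv N f"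
  by (simp add: multi_expect_def sum_distrib_left mult.left_commute)

lemma multi_expect_sum:
  "finite I \<Longrightarrow> multi_expect \<beta> hv N (\<lambda>S. \<Sum>i\<in>I. f i S) = (\<Sum>i\<in>I. multi_expect \<beta> hv N (f i))"
  by (simp add: multi_expect_def sum_distrib_left sum.swap[of _ I])

lemma sum_cw_prob_le_multi_expect:
  assumes "A \<subseteq> multi_configs N" and "\<And>S. S \<in> A \<Longrightarrow> 1 \<le> X S" and "\<And>S. X S \<ge> 0"
  shows "(\<Sum>S\<in>A. cw_prob \<beta> (hv :: 'm::finite \<Rightarrow> real) N S) \<le> multi_expect \<beta> hv N X"
proof -
  have "(\<Sum>S\<in>A. cw_prob \<beta> hv N S) \<le> (\<Sum>S\<in>A. cw_prob \<beta> hv N S * X S)"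
  proof (rule sum_mono)
    fix S assume "S \<in> A"
    show "cw_prob \<beta> hv N S \<le> cw_prob \<beta> hv N S * X S"
      using mult_left_mono[OF assms(2)[OF \<open>S \<in> A\<close>] cw_prob_nonneg[of \<beta> hv N S]] by simp
  qed
  also have "\<dots> \<le> multi_expect \<beta> hv N X"
    unfolding multi_expect_def using assms(1,3) cw_prob_nonneg
    by (intro sum_mono2 finite_multi_configs mult_nonneg_nonneg) auto
  finally show ?thesis .
qed

text \<open>When \<open>s\<close> and the spins \<open>S \<mu> i\<close> are \<open>\<plusminus>1\<close>, the product is the indicator that the spin column of
  site \<open>i\<close> equals \<open>s\<close>: this is the empirical frequency of the pattern \<open>s\<close>.\<close>
definition pattern_freq :: "nat \<Rightarrow> ('m::finite \<Rightarrow> real) \<Rightarrow> ('m \<Rightarrow> nat \<Rightarrow> real) \<Rightarrow> real" where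
  "pattern_freq N s S = (1 / real N) * (\<Sum>i<N. \<Prod>\<mu>\<in>UNIV. (1 + s \<mu> * S \<mu> i) / 2)"

definition pattern_prob :: "real \<Rightarrow> ('m::finite \<Rightarrow> real) \<Rightarrow> ('m \<Rightarrow> real) \<Rightarrow> real" where
  "pattern_prob \<beta> hv s = (\<Prod>\<mu>\<in>UNIV. (1 + s \<mu> * m0 \<beta> (hv \<mu>)) / 2)"

lemma pm_vectors_sq: "s \<in> pm_vectors \<Longrightarrow> s \<mu> * s \<mu> = 1"
proof -
  assume "s \<in> pm_vectors"
  then have "s \<mu> = - 1 \<or> s \<mu> = 1" by (simp add: pm_vectors_def)
  then show ?thesis by auto
qed

lemma cw_expect_site_factor:
  assumes "i < N"
  shows "cw_expect \<beta> h N (\<lambda>x. (1 + a * x i) / 2) = (1 + a * cw_expect \<beta> h N (\<lambda>x. x 0)) / 2"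
  using cw_expect_affine[of \<beta> h N "1 / 2" "a / 2" "\<lambda>x. x i"] cw_expect_spin[OF assms]
  by (simp add: add_divide_distrib)

lemma cw_expect_site_factor_pair:
  assumes a: "a \<in> {-1, 1}" and i: "i < N" and j: "j < N"
  shows "cw_expect \<beta> h N (\<lambda>x. (1 + a * x i) / 2 * ((1 + a * x j) / 2))
    = (if i = j then (1 + a * cw_expect \<beta> h N (\<lambda>x. x 0)) / 2
       else (1 + 2 * a * cw_expect \<beta> h N (\<lambda>x. x 0) + cw_expect \<beta> h N (\<lambda>x. x 0 * x 1)) / 4)"
proof -
  have aa: "a * a = 1" using a by auto
  show ?thesis
  proof (cases "i = j")
    case True
    have "cw_expect \<beta> h N (\<lambda>x. (1 + a * x i) / 2 * ((1 + a * x j) / 2)) = cw_expect \<beta> h N (\<lambda>x. (1 + a * x i) / 2)"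
      using spin_configs_sq[OF _ i] aa True by (intro cw_expect_cong) (simp add: algebra_simps)
    then show ?thesis using True cw_expect_site_factor[OF i] by simp
  next
    case False
    have "cw_expect \<beta> h N (\<lambda>x. (1 + a * x i) / 2 * ((1 + a * x j) / 2))
        = cw_expect \<beta> h N (\<lambda>x. 1 / 4 + ((a / 4) * x i + ((a / 4) * x j + (1 / 4) * (x i * x j))))"
      using aa by (intro cw_expect_cong) (simp add: algebra_simps)
    also have "\<dots> = 1 / 4 + ((a / 4) * cw_expect \<beta> h N (\<lambda>x. x i)
        + ((a / 4) * cw_expect \<beta> h N (\<lambda>x. x j) + (1 / 4) * cw_expect \<beta> h N (\<lambda>x. x i * x j)))"
      by (simp only: cw_expect_add cw_expect_const cw_expect_cmult)
    finally show ?thesis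
      using False cw_expect_spin[OF i] cw_expect_spin[OF j] cw_expect_spin_pair[OF i j False]
      by (simp add: algebra_simps)
  qed
qed

lemma multi_expect_pattern_freq:
  assumes N: "N > 0"
  shows "multi_expect \<beta> hv N (pattern_freq N s) = (\<Prod>\<mu>\<in>UNIV. (1 + s \<mu> * cw_expect \<beta> (hv \<mu>) N (\<lambda>x. x 0)) / 2)"
proof -
  have "multi_expect \<beta> hv N (pattern_freq N s)
      = (1 / real N) * (\<Sum>i<N. multi_expect \<beta> hv N (\<lambda>S. \<Prod>\<mu>\<in>UNIV. (1 + s \<mu> * S \<mu> i) / 2))"
    unfolding pattern_freq_def by (simp only: multi_expect_cmult multi_expect_sum[OF finite_lessThan])
  also have "\<dots> = (1 / real N) * (\<Sum>i<N. \<Prod>\<mu>\<in>UNIV. (1 + s \<mu> * cw_expect \<beta> (hv \<mu>) N (\<lambda>x. x 0)) / 2)"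
    using multi_expect_prod[of \<beta> hv N "\<lambda>\<mu> x. (1 + s \<mu> * x _) / 2"]
    by (simp add: cw_expect_site_factor)
  also have "\<dots> = (\<Prod>\<mu>\<in>UNIV. (1 + s \<mu> * cw_expect \<beta> (hv \<mu>) N (\<lambda>x. x 0)) / 2)" using N by simp
  finally show ?thesis .
qed

lemma multi_expect_pattern_freq_sq:
  assumes N: "N > 0" and s: "s \<in> pm_vectors"
  shows "multi_expect \<beta> hv N (\<lambda>S. (pattern_freq N s S)^2) =
    (1 / real N) * (\<Prod>\<mu>\<in>UNIV. (1 + s \<mu> * cw_expect \<beta> (hv \<mu>) N (\<lambda>x. x 0)) / 2)
    + ((real N - 1) / real N) * (\<Prod>\<mu>\<in>UNIV. (1 + 2 * s \<mu> * cw_expect \<beta> (hv \<mu>) N (\<lambda>x. x 0)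
        + cw_expect \<beta> (hv \<mu>) N (\<lambda>x. x 0 * x 1)) / 4)"
    (is "_ = (1 / real N) * ?P1 + _ * ?P2")
proof -
  let ?F = "\<lambda>i j \<mu> x. (1 + s \<mu> * x i) / 2 * ((1 + s \<mu> * x j) / 2)"
  have sq: "(pattern_freq N s S)^2 = (1 / real N)^2 * (\<Sum>i<N. \<Sum>j<N. \<Prod>\<mu>\<in>UNIV. ?F i j \<mu> (S \<mu>))" for S
    unfolding pattern_freq_def power2_eq_square
    by (simp add: sum_product prod.distrib[symmetric] mult_ac)
  have pair: "(\<Prod>\<mu>\<in>UNIV. cw_expect \<beta> (hv \<mu>) N (?F i j \<mu>)) = (if i = j then ?P1 else ?P2)"
    if "i < N" "j < N" for i j
    using cw_expect_site_factor_pair[of "s _" i N j \<beta>] s that by (simp add: pm_vectors_def)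
  have "multi_expect \<beta> hv N (\<lambda>S. (pattern_freq N s S)^2)
      = (1 / real N)^2 * (\<Sum>i<N. \<Sum>j<N. multi_expect \<beta> hv N (\<lambda>S. \<Prod>\<mu>\<in>UNIV. ?F i j \<mu> (S \<mu>)))"
    unfolding sq by (simp only: multi_expect_cmult multi_expect_sum[OF finite_lessThan])
  also have "\<dots> = (1 / real N)^2 * (\<Sum>i<N. \<Sum>j<N. \<Prod>\<mu>\<in>UNIV. cw_expect \<beta> (hv \<mu>) N (?F i j \<mu>))"
    using multi_expect_prod[of \<beta> hv N "?F _ _"] by simp
  also have "\<dots> = (1 / real N)^2 * (\<Sum>i<N. \<Sum>j<N. if i = j then ?P1 else ?P2)"
    by (intro arg_cong[where f = "\<lambda>t. (1 / real N)^2 * t"] sum.cong refl pair) auto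
  also have "\<dots> = (1 / real N) * ?P1 + ((real N - 1) / real N) * ?P2"
    using N by (simp add: sum_diag_offdiag power2_eq_square field_simps)
  finally show ?thesis .
qed

lemma pattern_freq_mean_square_tendsto:
  assumes b: "\<beta> > 0" and c: "\<forall>\<mu>. hv \<mu> \<noteq> 0 \<or> \<beta> \<le> 1" and s: "s \<in> pm_vectors"
  shows "(\<lambda>N. multi_expect \<beta> (hv :: 'm::finite \<Rightarrow> real) N (\<lambda>S. (pattern_freq N s S - pattern_prob \<beta> hv s)^2))
    \<longlonglongrightarrow> 0"
proof -
  let ?\<pi> = "pattern_prob \<beta> hv s"
  let ?P1 = "\<lambda>N. \<Prod>\<mu>\<in>UNIV. (1 + s \<mu> * cw_expect \<beta> (hv \<mu>) N (\<lambda>x. x 0)) / 2"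
  let ?P2 = "\<lambda>N. \<Prod>\<mu>\<in>UNIV. (1 + 2 * s \<mu> * cw_expect \<beta> (hv \<mu>) N (\<lambda>x. x 0)
    + cw_expect \<beta> (hv \<mu>) N (\<lambda>x. x 0 * x 1)) / 4"
  have m1: "(\<lambda>N. cw_expect \<beta> (hv \<mu>) N (\<lambda>x. x 0)) \<longlonglongrightarrow> m0 \<beta> (hv \<mu>)" for \<mu>
    using cw_expect_spin_tendsto[OF b] c by blast
  have m2: "(\<lambda>N. cw_expect \<beta> (hv \<mu>) N (\<lambda>x. x 0 * x 1)) \<longlonglongrightarrow> (m0 \<beta> (hv \<mu>))^2" for \<mu>
    using cw_expect_spin_pair_tendsto[OF b] c by blast
  have P1: "?P1 \<longlonglongrightarrow> ?\<pi>" unfolding pattern_prob_def by (intro tendsto_intros m1) auto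
  have "(1 + 2 * s \<mu> * m0 \<beta> (hv \<mu>) + (m0 \<beta> (hv \<mu>))^2) / 4 = ((1 + s \<mu> * m0 \<beta> (hv \<mu>)) / 2)^2" for \<mu>
    using pm_vectors_sq[OF s, of \<mu>] by (simp add: power2_eq_square algebra_simps)
  then have "(\<Prod>\<mu>\<in>UNIV. (1 + 2 * s \<mu> * m0 \<beta> (hv \<mu>) + (m0 \<beta> (hv \<mu>))^2) / 4) = ?\<pi>^2"
    by (simp add: pattern_prob_def prod_power_distrib)
  moreover have "?P2 \<longlonglongrightarrow> (\<Prod>\<mu>\<in>UNIV. (1 + 2 * s \<mu> * m0 \<beta> (hv \<mu>) + (m0 \<beta> (hv \<mu>))^2) / 4)"
    by (intro tendsto_intros m1 m2) auto
  ultimately have P2: "?P2 \<longlonglongrightarrow> ?\<pi>^2" by simp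
  have "(\<lambda>N. (1 / real N) * ?P1 N + (1 - 1 / real N) * ?P2 N + (- 2 * ?\<pi>) * ?P1 N + ?\<pi>^2) \<longlonglongrightarrow>
      0 * ?\<pi> + (1 - 0) * ?\<pi>^2 + (- 2 * ?\<pi>) * ?\<pi> + ?\<pi>^2"
    by (intro tendsto_intros P1 P2 lim_inverse_n')
  moreover have "\<forall>\<^sub>F N in sequentially. (1 / real N) * ?P1 N + (1 - 1 / real N) * ?P2 N + (- 2 * ?\<pi>) * ?P1 N + ?\<pi>^2
      = multi_expect \<beta> hv N (\<lambda>S. (pattern_freq N s S - ?\<pi>)^2)"
    using eventually_gt_at_top[of "0::nat"]
  proof eventually_elim
    case (elim N)
    have "(\<lambda>S. (pattern_freq N s S - ?\<pi>)^2)
        = (\<lambda>S. (pattern_freq N s S)^2 + ((- 2 * ?\<pi>) * pattern_freq N s S + ?\<pi>^2))"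
      by (auto simp: fun_eq_iff power2_eq_square algebra_simps)
    then have "multi_expect \<beta> hv N (\<lambda>S. (pattern_freq N s S - ?\<pi>)^2)
        = multi_expect \<beta> hv N (\<lambda>S. (pattern_freq N s S)^2) + ((- 2 * ?\<pi>) * multi_expect \<beta> hv N (pattern_freq N s) + ?\<pi>^2)"
      by (simp only: multi_expect_add multi_expect_cmult multi_expect_const)
    then show ?case
      using elim by (simp add: multi_expect_pattern_freq_sq[OF elim s] multi_expect_pattern_freq[OF elim]
          diff_divide_distrib)
  qed
  ultimately show ?thesis using tendsto_cong by (fastforce simp: power2_eq_square)
qed

lemma pm_vectors_eq_PiE: "(pm_vectors :: ('m::finite \<Rightarrow> real) set) = PiE UNIV (\<lambda>_. {-1, 1})"
  by (simp add: pm_vectors_def PiE_UNIV_domain Pi_def)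

lemma finite_pm_vectors: "finite (pm_vectors :: ('m::finite \<Rightarrow> real) set)"
  unfolding pm_vectors_eq_PiE by (intro finite_PiE) auto

lemma card_pm_vectors_pos: "card (pm_vectors :: ('m::finite \<Rightarrow> real) set) > 0"
  using finite_pm_vectors card_gt_0_iff[of "pm_vectors :: ('m \<Rightarrow> real) set"]
  by (auto simp: pm_vectors_def intro!: exI[of _ "\<lambda>_. 1"])

lemma pattern_indicator:
  assumes "s \<in> pm_vectors" "t \<in> pm_vectors"
  shows "(\<Prod>\<mu>\<in>(UNIV::'m::finite set). (1 + s \<mu> * t \<mu>) / 2) = (if s = t then 1 else 0)"
proof (cases "s = t")
  case True
  have "(1 + t \<mu> * t \<mu>) / 2 = 1" for \<mu>
    using pm_vectors_sq[OF assms(2)] by simp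
  then show ?thesis using True by simp
next
  case False
  then obtain \<mu> where "s \<mu> \<noteq> t \<mu>" by auto
  moreover have "s \<mu> = - 1 \<or> s \<mu> = 1" "t \<mu> = - 1 \<or> t \<mu> = 1"
    using assms by (auto simp: pm_vectors_def)
  ultimately have "(1 + s \<mu> * t \<mu>) / 2 = 0" by auto
  then have "(\<Prod>\<mu>\<in>UNIV. (1 + s \<mu> * t \<mu>) / 2) = 0" by (intro prod_zero) auto
  then show ?thesis using False by simp
qed

lemma empirical_mean_eq_sum_pattern_freq:
  assumes S: "S \<in> multi_configs N"
  shows "(1 / real N) * (\<Sum>i<N. G (\<lambda>\<mu>. S \<mu> i))
    = (\<Sum>s\<in>(pm_vectors :: ('m::finite \<Rightarrow> real) set). G s * pattern_freq N s S)"
proof -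
  have col: "(\<lambda>\<mu>. S \<mu> i) \<in> pm_vectors" if "i < N" for i
    using S that by (auto simp: multi_configs_def spin_configs_def pm_vectors_def)
  have "G (\<lambda>\<mu>. S \<mu> i) = (\<Sum>s\<in>pm_vectors. G s * (\<Prod>\<mu>\<in>(UNIV::'m set). (1 + s \<mu> * S \<mu> i) / 2))"
    if "i < N" for i
  proof -
    have "(\<Sum>s\<in>pm_vectors. G s * (\<Prod>\<mu>\<in>(UNIV::'m set). (1 + s \<mu> * S \<mu> i) / 2))
        = (\<Sum>s\<in>pm_vectors. if s = (\<lambda>\<mu>. S \<mu> i) then G s else 0)"
      using col[OF that] by (intro sum.cong refl) (simp add: pattern_indicator)
    then show ?thesis using col[OF that] by (simp add: finite_pm_vectors)
  qed
  then have "(\<Sum>i<N. G (\<lambda>\<mu>. S \<mu> i))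
      = (\<Sum>s\<in>pm_vectors. G s * (\<Sum>i<N. \<Prod>\<mu>\<in>(UNIV::'m set). (1 + s \<mu> * S \<mu> i) / 2))"
    by (simp add: sum.swap[of _ "{..<N}"] sum_distrib_left)
  then show ?thesis by (simp add: pattern_freq_def sum_distrib_left mult.left_commute)
qed

lemma empirical_dev_imp_pattern_freq_dev:
  assumes S: "S \<in> multi_configs N" and B: "B > 0" "\<And>s. s \<in> pm_vectors \<Longrightarrow> \<bar>G s\<bar> \<le> B"
    and dev: "e < \<bar>(1 / real N) * (\<Sum>i<N. G (\<lambda>\<mu>. S \<mu> i)) - (\<Sum>s\<in>pm_vectors. G s * q s)\<bar>"
  shows "\<exists>s\<in>(pm_vectors :: ('m::finite \<Rightarrow> real) set).
    e / (B * real (card (pm_vectors :: ('m \<Rightarrow> real) set))) < \<bar>pattern_freq N s S - q s\<bar>"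
proof (rule ccontr)
  let ?\<delta> = "e / (B * real (card (pm_vectors :: ('m \<Rightarrow> real) set)))"
  assume "\<not> ?thesis"
  then have small: "\<bar>pattern_freq N s S - q s\<bar> \<le> ?\<delta>" if "s \<in> pm_vectors" for s
    using that by auto
  have "\<bar>(1 / real N) * (\<Sum>i<N. G (\<lambda>\<mu>. S \<mu> i)) - (\<Sum>s\<in>pm_vectors. G s * q s)\<bar>
      = \<bar>\<Sum>s\<in>(pm_vectors :: ('m \<Rightarrow> real) set). G s * (pattern_freq N s S - q s)\<bar>"
    unfolding empirical_mean_eq_sum_pattern_freq[OF S] by (simp add: sum_subtractf right_diff_distrib)
  also have "\<dots> \<le> (\<Sum>s\<in>(pm_vectors :: ('m \<Rightarrow> real) set). B * ?\<delta>)"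
  proof (intro order_trans[OF sum_abs] sum_mono)
    fix s :: "'m \<Rightarrow> real" assume "s \<in> pm_vectors"
    then show "\<bar>G s * (pattern_freq N s S - q s)\<bar> \<le> B * ?\<delta>"
      unfolding abs_mult using B small by (intro mult_mono) auto
  qed
  also have "\<dots> = e" using B card_pm_vectors_pos[where 'm = 'm] by simp
  finally show False using dev by simp
qed

lemma pattern_freq_dev_prob_tendsto:
  assumes b: "\<beta> > 0" and c: "\<forall>\<mu>. hv \<mu> \<noteq> 0 \<or> \<beta> \<le> 1" and \<delta>: "\<delta> > 0"
  shows "(\<lambda>N. \<Sum>S\<in>{S\<in>multi_configs N. \<exists>s\<in>pm_vectors. \<delta> < \<bar>pattern_freq N s S - pattern_prob \<beta> hv s\<bar>}.
      cw_prob \<beta> (hv :: 'm::finite \<Rightarrow> real) N S) \<longlonglongrightarrow> 0"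
proof -
  define X where "X N S = (\<Sum>s\<in>(pm_vectors :: ('m \<Rightarrow> real) set).
    (1 / \<delta>^2) * (pattern_freq N s S - pattern_prob \<beta> hv s)^2)" for N S
  have le: "(\<Sum>S\<in>{S\<in>multi_configs N. \<exists>s\<in>pm_vectors. \<delta> < \<bar>pattern_freq N s S - pattern_prob \<beta> hv s\<bar>}.
      cw_prob \<beta> hv N S) \<le> multi_expect \<beta> hv N (X N)" for N
  proof (rule sum_cw_prob_le_multi_expect)
    fix S assume "S \<in> {S\<in>multi_configs N. \<exists>s\<in>pm_vectors. \<delta> < \<bar>pattern_freq N s S - pattern_prob \<beta> hv s\<bar>}"
    then obtain s where s: "s \<in> pm_vectors" "\<delta> < \<bar>pattern_freq N s S - pattern_prob \<beta> hv s\<bar>" by blast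
    then have "\<delta>^2 < \<bar>pattern_freq N s S - pattern_prob \<beta> hv s\<bar>^2"
      using \<delta> by (intro power_strict_mono) auto
    then have "1 \<le> (1 / \<delta>^2) * (pattern_freq N s S - pattern_prob \<beta> hv s)^2"
      using \<delta> by (simp add: field_simps)
    also have "\<dots> \<le> X N S"
      unfolding X_def by (rule member_le_sum[OF s(1)]) (auto intro: finite_pm_vectors)
    finally show "1 \<le> X N S" .
  qed (auto simp: X_def intro: sum_nonneg)
  have "multi_expect \<beta> hv N (X N) = (\<Sum>s\<in>(pm_vectors :: ('m \<Rightarrow> real) set).
      (1 / \<delta>^2) * multi_expect \<beta> hv N (\<lambda>S. (pattern_freq N s S - pattern_prob \<beta> hv s)^2))" for N
    unfolding X_def by (simp only: multi_expect_sum[OF finite_pm_vectors] multi_expect_cmult)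
  moreover have "(\<lambda>N. \<Sum>s\<in>(pm_vectors :: ('m \<Rightarrow> real) set).
      (1 / \<delta>^2) * multi_expect \<beta> hv N (\<lambda>S. (pattern_freq N s S - pattern_prob \<beta> hv s)^2))
      \<longlonglongrightarrow> (\<Sum>s\<in>(pm_vectors :: ('m \<Rightarrow> real) set). (1 / \<delta>^2) * 0)"
    by (intro tendsto_sum tendsto_mult tendsto_const pattern_freq_mean_square_tendsto[OF b c])
  ultimately have lim: "(\<lambda>N. multi_expect \<beta> hv N (X N)) \<longlonglongrightarrow> 0" by simp
  show ?thesis
    by (rule tendsto_sandwich[where f = "\<lambda>_. 0", OF always_eventually always_eventually _ lim])
      (use le in \<open>auto intro: sum_nonneg cw_prob_nonneg\<close>)
qed

lemma empirical_mean_dev_prob_tendsto: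
  assumes b: "\<beta> > 0" and c: "\<forall>\<mu>. hv \<mu> \<noteq> 0 \<or> \<beta> \<le> 1" and e: "e > 0"
    and B: "\<And>p s. p \<in> K \<Longrightarrow> s \<in> pm_vectors \<Longrightarrow> \<bar>G p s\<bar> \<le> B"
  shows "(\<lambda>N. \<Sum>S\<in>{S\<in>multi_configs N. \<exists>p\<in>K.
      e < \<bar>(1 / real N) * (\<Sum>i<N. G p (\<lambda>\<mu>. S \<mu> i)) - (\<Sum>s\<in>pm_vectors. G p s * pattern_prob \<beta> hv s)\<bar>}.
      cw_prob \<beta> (hv :: 'm::finite \<Rightarrow> real) N S) \<longlonglongrightarrow> 0"
proof -
  define \<delta> where "\<delta> = e / ((\<bar>B\<bar> + 1) * real (card (pm_vectors :: ('m \<Rightarrow> real) set)))"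
  have \<delta>: "\<delta> > 0" using e card_pm_vectors_pos[where 'm = 'm] by (simp add: \<delta>_def add_pos_nonneg)
  have "{S\<in>multi_configs N. \<exists>p\<in>K.
      e < \<bar>(1 / real N) * (\<Sum>i<N. G p (\<lambda>\<mu>. S \<mu> i)) - (\<Sum>s\<in>pm_vectors. G p s * pattern_prob \<beta> hv s)\<bar>}
      \<subseteq> {S\<in>multi_configs N. \<exists>s\<in>pm_vectors. \<delta> < \<bar>pattern_freq N s S - pattern_prob \<beta> hv s\<bar>}" for N
  proof (intro subsetI, elim CollectE conjE bexE, intro CollectI conjI)
    fix S p assume S: "S \<in> multi_configs N" and p: "p \<in> K" and dev: "e < \<bar>(1 / real N)
      * (\<Sum>i<N. G p (\<lambda>\<mu>. S \<mu> i)) - (\<Sum>s\<in>pm_vectors. G p s * pattern_prob \<beta> hv s)\<bar>"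
    show "S \<in> multi_configs N" by (fact S)
    have "\<bar>G p s\<bar> \<le> \<bar>B\<bar> + 1" if "s \<in> pm_vectors" for s using B[OF p that] by linarith
    then show "\<exists>s\<in>pm_vectors. \<delta> < \<bar>pattern_freq N s S - pattern_prob \<beta> hv s\<bar>"
      using empirical_dev_imp_pattern_freq_dev[OF S _ _ dev] unfolding \<delta>_def by (simp add: add_pos_nonneg)
  qed
  then have le: "(\<Sum>S\<in>{S\<in>multi_configs N. \<exists>p\<in>K.
      e < \<bar>(1 / real N) * (\<Sum>i<N. G p (\<lambda>\<mu>. S \<mu> i)) - (\<Sum>s\<in>pm_vectors. G p s * pattern_prob \<beta> hv s)\<bar>}.
        cw_prob \<beta> hv N S)
      \<le> (\<Sum>S\<in>{S\<in>multi_configs N. \<exists>s\<in>pm_vectors. \<delta> < \<bar>pattern_freq N s S - pattern_prob \<beta> hv s\<bar>}.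
        cw_prob \<beta> hv N S)" for N
    using cw_prob_nonneg by (intro sum_mono2) (auto intro: finite_subset[OF _ finite_multi_configs])
  show ?thesis
    by (rule tendsto_sandwich[where f = "\<lambda>_. 0", OF always_eventually always_eventually _
        pattern_freq_dev_prob_tendsto[OF b c \<delta>]])
      (use le in \<open>auto intro: sum_nonneg cw_prob_nonneg\<close>)
qed

theorem lemma2:
  fixes \<beta> h :: real
    and \<epsilon> :: "'m::finite \<Rightarrow> real"
    and K :: "(real^'m) set"
    and F :: "real^'m \<Rightarrow> ('m \<Rightarrow> real) \<Rightarrow> real"
  assumes "\<beta> > 0"
    and "h \<noteq> 0 \<or> \<beta> \<le> 1"
    and "\<forall>\<mu>. \<epsilon> \<mu> \<in> {-1, 1}"
    and "compact K"
    and "\<exists>B. \<forall>p\<in>K. \<forall>s\<in>pm_vectors. \<bar>F p s\<bar> \<le> B"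
  shows "\<forall>e>0. (\<lambda>N. \<Sum>S\<in>{S\<in>multi_configs N.
              \<exists>p\<in>K. \<bar>(1 / real N) * (\<Sum>i<N. F p (\<lambda>\<mu>. S \<mu> i)) - avg_s \<beta> h \<epsilon> (F p)\<bar> > e}.
            cw_prob \<beta> (\<lambda>\<mu>. h * \<epsilon> \<mu>) N S) \<longlonglongrightarrow> 0"
proof (intro allI impI)
  fix e :: real assume e: "e > 0"
  obtain B where B: "\<forall>p\<in>K. \<forall>s\<in>pm_vectors. \<bar>F p s\<bar> \<le> B" using assms(5) by blast
  have field: "\<forall>\<mu>. h * \<epsilon> \<mu> \<noteq> 0 \<or> \<beta> \<le> 1"
    using assms(2,3) by (metis empty_iff insert_iff mult_eq_0_iff neg_0_equal_iff_equal zero_neq_one)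
  have "avg_s \<beta> h \<epsilon> (F p) = (\<Sum>s\<in>pm_vectors. F p s * pattern_prob \<beta> (\<lambda>\<mu>. h * \<epsilon> \<mu>) s)" for p
    by (simp add: avg_s_def pattern_prob_def mult.commute)
  then show "(\<lambda>N. \<Sum>S\<in>{S\<in>multi_configs N.
      \<exists>p\<in>K. \<bar>(1 / real N) * (\<Sum>i<N. F p (\<lambda>\<mu>. S \<mu> i)) - avg_s \<beta> h \<epsilon> (F p)\<bar> > e}.
      cw_prob \<beta> (\<lambda>\<mu>. h * \<epsilon> \<mu>) N S) \<longlonglongrightarrow> 0"
    using empirical_mean_dev_prob_tendsto[OF assms(1) field e, of K F B] B by simp
qed

end
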